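(* For every $n\in\mathbb{N}$ and every admissible $\Theta$: if $p$ is a projector over $A(\mathbb{R}^{2n}_\Theta)$, then all entries of $p$ are scalar multiples of the identity (i.e. $p$ is a projector over $\mathbb{C}$), and hence $K_0(A(\mathbb{R}^{2n}_\Theta))=K_0(\mathbb{C})\cong\mathbb{Z}$.
   Context: Let $\Theta=(\theta_{pq})_{1\leq p,q\leq 2n}$ be a real skew-symmetric matrix with $\theta_{2m-1,2m}=-\theta_{2m,2m-1}>0$ for $m=1,\dots,n$ and all other entries $0$. $A(\mathbb{R}^{2n}_\Theta)$ is the unital $*$-algebra generated by self-adjoint $x_1,\dots,x_{2n}$ with $[x_p,x_q]=-i\theta_{pq}$; every element is a finite sum $\sum a_{p_1,\dots,p_{2n}}x_1^{p_1}\cdots x_{2n}^{p_{2n}}$ with linearly independent ordered monomials. A projector over a $*$-algebra $A$ is a square matrix $p$ over $A$ with $p^2=p=p^*$; projectors $p,q$ are equivalent if $\mathrm{diag}(p,0)=u\,\mathrm{diag}(q,0)\,u^*$ for some unitary matrix $u$ over $A$; $K_0(A)$ is the Grothendieck group of equivalence classes under $p+q:=\mathrm{diag}(p,q)$. *)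

theory Defs
  imports Complex_Main "HOL-Library.Function_Algebras"
begin

text \<open>Elements of A(R^{2n}_Theta): coefficient functions on multi-indices
  (alpha i = exponent of the generator x_{i+1}, 0-based), finitely supported,
  and only involving the generators x_1..x_{2n}. The function represents
  sum alpha. f alpha * x_1^{alpha 0} ... x_{2n}^{alpha (2n-1)} (ordered monomials).
  The admissible Theta is encoded by theta m = theta_{2m+1,2m+2} > 0 (m < n).\<close>

type_synonym elem = "(nat \<Rightarrow> nat) \<Rightarrow> complex"
type_synonym mat = "nat \<times> (nat \<Rightarrow> nat \<Rightarrow> elem)"

definition Aelem :: "nat \<Rightarrow> elem \<Rightarrow> bool" where
  "Aelem n f \<longleftrightarrow> finite {\<alpha>. f \<alpha> \<noteq> 0} \<and> (\<forall>\<alpha>. f \<alpha> \<noteq> 0 \<longrightarrow> (\<forall>i\<ge>2*n. \<alpha> i = 0))"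

text \<open>Coefficient of the ordered monomial x^gamma in the product x^alpha x^beta,
  using [x_{2m+1}, x_{2m+2}] = -i theta_m (1-based), i.e.
  y^b x^c = sum_k k! (b choose k)(c choose k) (i theta)^k x^(c-k) y^(b-k),
  generators from different pairs commuting.\<close>
definition ncoeff :: "(nat \<Rightarrow> real) \<Rightarrow> nat \<Rightarrow> (nat \<Rightarrow> nat) \<Rightarrow> (nat \<Rightarrow> nat) \<Rightarrow> (nat \<Rightarrow> nat) \<Rightarrow> complex" where
  "ncoeff \<theta> n \<alpha> \<beta> \<gamma> =
    (if (\<forall>i\<ge>2*n. \<gamma> i = 0) \<and>
        (\<forall>m<n. \<gamma> (2*m) \<le> \<alpha> (2*m) + \<beta> (2*m) \<and>
               \<gamma> (2*m+1) + (\<alpha> (2*m) + \<beta> (2*m) - \<gamma> (2*m)) = \<alpha> (2*m+1) + \<beta> (2*m+1) \<and>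
               \<alpha> (2*m) + \<beta> (2*m) - \<gamma> (2*m) \<le> \<alpha> (2*m+1) \<and>
               \<alpha> (2*m) + \<beta> (2*m) - \<gamma> (2*m) \<le> \<beta> (2*m))
     then (\<Prod>m<n. let k = \<alpha> (2*m) + \<beta> (2*m) - \<gamma> (2*m) in
             of_nat (fact k * (\<alpha> (2*m+1) choose k) * (\<beta> (2*m) choose k))
             * (\<i> * complex_of_real (\<theta> m)) ^ k)
     else 0)"

definition amult :: "(nat \<Rightarrow> real) \<Rightarrow> nat \<Rightarrow> elem \<Rightarrow> elem \<Rightarrow> elem" where
  "amult \<theta> n f g = (\<lambda>\<gamma>. \<Sum>\<alpha>\<in>{\<alpha>. f \<alpha> \<noteq> 0}. \<Sum>\<beta>\<in>{\<beta>. g \<beta> \<noteq> 0}.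
                        f \<alpha> * g \<beta> * ncoeff \<theta> n \<alpha> \<beta> \<gamma>)"

definition mono :: "(nat \<Rightarrow> nat) \<Rightarrow> elem" where
  "mono \<alpha> = (\<lambda>\<gamma>. if \<gamma> = \<alpha> then 1 else 0)"

definition ascal :: "complex \<Rightarrow> elem" where
  "ascal c = (\<lambda>\<gamma>. if \<gamma> = (\<lambda>_. 0) then c else 0)"

abbreviation aone :: elem where "aone \<equiv> ascal 1"

text \<open>Involution: antilinear, with (x^alpha)^* = reversed product
  = (product of the x_{2m+2} powers) * (product of the x_{2m+1} powers).\<close>
definition astar :: "(nat \<Rightarrow> real) \<Rightarrow> nat \<Rightarrow> elem \<Rightarrow> elem" where
  "astar \<theta> n f = (\<Sum>\<alpha>\<in>{\<alpha>. f \<alpha> \<noteq> 0}. (\<lambda>\<gamma>. cnj (f \<alpha>) *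
      amult \<theta> n (mono (\<lambda>i. if odd i then \<alpha> i else 0))
                 (mono (\<lambda>i. if even i then \<alpha> i else 0)) \<gamma>))"

text \<open>Square matrices over A: (size k, entries); only entries i,j < k matter.\<close>
definition is_mat :: "nat \<Rightarrow> mat \<Rightarrow> bool" where
  "is_mat n P \<longleftrightarrow> (\<forall>i<fst P. \<forall>j<fst P. Aelem n (snd P i j))"

definition mmult :: "(nat \<Rightarrow> real) \<Rightarrow> nat \<Rightarrow> nat \<Rightarrow> (nat \<Rightarrow> nat \<Rightarrow> elem) \<Rightarrow> (nat \<Rightarrow> nat \<Rightarrow> elem) \<Rightarrow> (nat \<Rightarrow> nat \<Rightarrow> elem)" where
  "mmult \<theta> n k M N = (\<lambda>i j. \<Sum>l<k. amult \<theta> n (M i l) (N l j))"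

definition madj :: "(nat \<Rightarrow> real) \<Rightarrow> nat \<Rightarrow> (nat \<Rightarrow> nat \<Rightarrow> elem) \<Rightarrow> (nat \<Rightarrow> nat \<Rightarrow> elem)" where
  "madj \<theta> n M = (\<lambda>i j. astar \<theta> n (M j i))"

definition projector :: "(nat \<Rightarrow> real) \<Rightarrow> nat \<Rightarrow> mat \<Rightarrow> bool" where
  "projector \<theta> n P \<longleftrightarrow> is_mat n P \<and>
     (\<forall>i<fst P. \<forall>j<fst P. mmult \<theta> n (fst P) (snd P) (snd P) i j = snd P i j
                         \<and> madj \<theta> n (snd P) i j = snd P i j)"

definition unitary :: "(nat \<Rightarrow> real) \<Rightarrow> nat \<Rightarrow> nat \<Rightarrow> (nat \<Rightarrow> nat \<Rightarrow> elem) \<Rightarrow> bool" where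
  "unitary \<theta> n k U \<longleftrightarrow> is_mat n (k, U) \<and>
     (\<forall>i<k. \<forall>j<k. mmult \<theta> n k U (madj \<theta> n U) i j = (if i = j then aone else 0)
                  \<and> mmult \<theta> n k (madj \<theta> n U) U i j = (if i = j then aone else 0))"

definition dsum :: "mat \<Rightarrow> mat \<Rightarrow> mat" where
  "dsum P Q = (fst P + fst Q, \<lambda>i j. if i < fst P \<and> j < fst P then snd P i j
                   else if fst P \<le> i \<and> fst P \<le> j then snd Q (i - fst P) (j - fst P) else 0)"

definition zmat :: "nat \<Rightarrow> mat" where
  "zmat m = (m, \<lambda>i j. 0)"

definition proj_equiv :: "(nat \<Rightarrow> real) \<Rightarrow> nat \<Rightarrow> mat \<Rightarrow> mat \<Rightarrow> bool" where
  "proj_equiv \<theta> n P Q \<longleftrightarrow> (\<exists>m m' U.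
     fst P + m = fst Q + m' \<and> unitary \<theta> n (fst P + m) U \<and>
     (\<forall>i<fst P + m. \<forall>j<fst P + m. snd (dsum P (zmat m)) i j =
        mmult \<theta> n (fst P + m) (mmult \<theta> n (fst P + m) U (snd (dsum Q (zmat m')))) (madj \<theta> n U) i j))"

text \<open>Equality in the Grothendieck group K_0: [P]-[Q] = [P']-[Q'] iff
  P + Q' + R ~ P' + Q + R for some projector R.\<close>
definition K0_eq :: "(nat \<Rightarrow> real) \<Rightarrow> nat \<Rightarrow> mat \<Rightarrow> mat \<Rightarrow> mat \<Rightarrow> mat \<Rightarrow> bool" where
  "K0_eq \<theta> n P Q P' Q' \<longleftrightarrow> (\<exists>R. projector \<theta> n R \<and>
     proj_equiv \<theta> n (dsum (dsum P Q') R) (dsum (dsum P' Q) R))"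

end

theory Submission
  imports Defs
begin

text \<open>Compare multi-indices reverse-lexicographically. The commutation relations only lower
  exponents, so if \<mu> is the largest exponent occurring in f, the coefficient of x^(2\<mu>) in
  f f^* is |f_\<mu>|^2. For a row of a projector p we have \<Sum>_l p_il p_il^* = p_ii; choosing \<mu>
  largest among all exponents of the row, the coefficient of x^(2\<mu>) in this sum is
  \<Sum>_l |p_il(\<mu>)|^2 > 0, so 2\<mu> occurs in the row as well, which forces \<mu> = 0. Thus projectors,
  and in the same way unitaries, have scalar entries.

  Over the complex numbers a projection is a sum of rank-one projections onto orthonormal
  vectors, so its trace is a natural number, and two projections of the same size are
  unitarily equivalent iff their traces agree. Hence the rank identifies K_0 with the integers.\<close>

section \<open>Multi-indices and the reverse lexicographic order\<close>

definition bounded_index :: "nat \<Rightarrow> (nat \<Rightarrow> nat) \<Rightarrow> bool" where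
  "bounded_index n \<alpha> \<longleftrightarrow> (\<forall>i\<ge>2*n. \<alpha> i = 0)"

lemma bounded_index_add: "bounded_index n \<alpha> \<Longrightarrow> bounded_index n \<beta> \<Longrightarrow> bounded_index n (\<alpha> + \<beta>)"
  by (simp add: bounded_index_def)

lemma bounded_index_le: "bounded_index n \<beta> \<Longrightarrow> \<alpha> \<le> \<beta> \<Longrightarrow> bounded_index n \<alpha>"
  by (simp add: bounded_index_def le_fun_def) (metis le_0_eq)

lemma finite_bounded_index_le: "finite {\<gamma>. \<gamma> \<le> \<alpha> \<and> bounded_index n \<gamma>}"
proof (rule finite_subset)
  let ?B = "Max (\<alpha> ` {..<2*n})"
  show "{\<gamma>. \<gamma> \<le> \<alpha> \<and> bounded_index n \<gamma>} \<subseteq>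
      {\<gamma>. \<forall>i. (i \<in> {..<2*n} \<longrightarrow> \<gamma> i \<in> {..?B}) \<and> (i \<notin> {..<2*n} \<longrightarrow> \<gamma> i = 0)}"
  proof (rule subsetI, simp only: mem_Collect_eq, intro allI conjI impI)
    fix \<gamma> i assume \<gamma>: "\<gamma> \<le> \<alpha> \<and> bounded_index n \<gamma>"
    show "\<gamma> i \<in> {..?B}" if "i \<in> {..<2*n}"
      using \<gamma> that by (meson Max_ge atMost_iff finite_imageI finite_lessThan imageI le_funD le_trans)
    show "\<gamma> i = 0" if "i \<notin> {..<2*n}"
      using \<gamma> that by (simp add: bounded_index_def)
  qed
qed (intro finite_set_of_finite_funs; simp)

definition revlex_less :: "(nat \<Rightarrow> nat) \<Rightarrow> (nat \<Rightarrow> nat) \<Rightarrow> bool" where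
  "revlex_less \<alpha> \<beta> \<longleftrightarrow> (\<exists>j. \<alpha> j < \<beta> j \<and> (\<forall>i>j. \<alpha> i = \<beta> i))"

abbreviation revlex_le :: "(nat \<Rightarrow> nat) \<Rightarrow> (nat \<Rightarrow> nat) \<Rightarrow> bool" where
  "revlex_le \<alpha> \<beta> \<equiv> \<alpha> = \<beta> \<or> revlex_less \<alpha> \<beta>"

lemma revlex_less_irrefl: "\<not> revlex_less \<alpha> \<alpha>"
  by (simp add: revlex_less_def)

lemma revlex_less_trans:
  assumes "revlex_less \<alpha> \<beta>" "revlex_less \<beta> \<gamma>"
  shows "revlex_less \<alpha> \<gamma>"
proof -
  obtain j where j: "\<alpha> j < \<beta> j" "\<forall>i>j. \<alpha> i = \<beta> i"
    using assms(1) revlex_less_def by blast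
  obtain j' where j': "\<beta> j' < \<gamma> j'" "\<forall>i>j'. \<beta> i = \<gamma> i"
    using assms(2) revlex_less_def by blast
  have "\<alpha> (max j j') < \<gamma> (max j j') \<and> (\<forall>i>max j j'. \<alpha> i = \<gamma> i)"
    using j j' by (cases j j' rule: linorder_cases) auto
  then show ?thesis
    unfolding revlex_less_def by blast
qed

lemma revlex_le_trans: "revlex_le \<alpha> \<beta> \<Longrightarrow> revlex_le \<beta> \<gamma> \<Longrightarrow> revlex_le \<alpha> \<gamma>"
  using revlex_less_trans by blast

lemma revlex_le_trans_strict:
  assumes "revlex_le \<alpha> \<beta>" "revlex_le \<beta> \<gamma>" "\<alpha> \<noteq> \<beta> \<or> \<beta> \<noteq> \<gamma>"
  shows "revlex_less \<alpha> \<gamma>"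
  using assms revlex_less_trans[of \<alpha> \<beta> \<gamma>] by auto

lemma revlex_less_add_right: "revlex_less \<alpha> \<beta> \<Longrightarrow> revlex_less (\<alpha> + \<gamma>) (\<beta> + \<gamma>)"
  by (auto simp: revlex_less_def)

lemma revlex_less_add_left: "revlex_less \<alpha> \<beta> \<Longrightarrow> revlex_less (\<gamma> + \<alpha>) (\<gamma> + \<beta>)"
  by (auto simp: revlex_less_def)

lemma revlex_less_add:
  assumes "revlex_le \<alpha> \<mu>" "revlex_le \<beta> \<nu>" "\<alpha> \<noteq> \<mu> \<or> \<beta> \<noteq> \<nu>"
  shows "revlex_less (\<alpha> + \<beta>) (\<mu> + \<nu>)"
proof -
  have "revlex_le (\<alpha> + \<beta>) (\<mu> + \<beta>)" "revlex_le (\<mu> + \<beta>) (\<mu> + \<nu>)"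
    using assms(1,2) revlex_less_add_right revlex_less_add_left by blast+
  moreover have "\<alpha> + \<beta> \<noteq> \<mu> + \<beta> \<or> \<mu> + \<beta> \<noteq> \<mu> + \<nu>"
    using assms(3) by (auto simp: fun_eq_iff)
  ultimately show ?thesis
    by (rule revlex_le_trans_strict)
qed

lemma highest_difference:
  assumes "bounded_index n \<alpha>" "bounded_index n \<beta>" "\<alpha> \<noteq> \<beta>"
  obtains j where "\<alpha> j \<noteq> \<beta> j" "\<forall>i>j. \<alpha> i = \<beta> i"
proof -
  let ?D = "{i. \<alpha> i \<noteq> \<beta> i}"
  have "?D \<subseteq> {..<2*n}"
    using assms(1,2) unfolding bounded_index_def by (metis (mono_tags) lessThan_iff mem_Collect_eq not_le subsetI)
  then have fin: "finite ?D"
    using finite_subset by blast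
  have ne: "?D \<noteq> {}"
    using assms(3) by (simp add: fun_eq_iff)
  show ?thesis
  proof (rule that)
    show "\<alpha> (Max ?D) \<noteq> \<beta> (Max ?D)"
      using Max_in[OF fin ne] by simp
    show "\<forall>i>Max ?D. \<alpha> i = \<beta> i"
      using Max_ge[OF fin] by (metis (mono_tags) mem_Collect_eq not_le)
  qed
qed

lemma revlex_less_total:
  "bounded_index n \<alpha> \<Longrightarrow> bounded_index n \<beta> \<Longrightarrow> \<alpha> \<noteq> \<beta> \<Longrightarrow> revlex_less \<alpha> \<beta> \<or> revlex_less \<beta> \<alpha>"
  by (erule (2) highest_difference) (metis linorder_neqE_nat revlex_less_def)

lemma revlex_less_if_less:
  assumes "bounded_index n \<beta>" "\<alpha> < \<beta>"
  shows "revlex_less \<alpha> \<beta>"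
proof -
  have "\<alpha> \<le> \<beta>" "\<alpha> \<noteq> \<beta>"
    using assms(2) by auto
  moreover obtain j where "\<alpha> j \<noteq> \<beta> j" "\<forall>i>j. \<alpha> i = \<beta> i"
    using highest_difference[OF bounded_index_le[OF assms(1) calculation(1)] assms(1) calculation(2)] by blast
  ultimately show ?thesis
    unfolding revlex_less_def le_fun_def by (metis le_neq_implies_less)
qed

lemma revlex_greatest:
  assumes "finite S" "S \<noteq> {}" "\<forall>\<alpha>\<in>S. bounded_index n \<alpha>"
  shows "\<exists>\<mu>\<in>S. \<forall>\<alpha>\<in>S. revlex_le \<alpha> \<mu>"
  using assms
proof (induction S rule: finite_ne_induct)
  case (insert \<beta> S)
  then obtain \<mu> where \<mu>: "\<mu> \<in> S" "\<forall>\<alpha>\<in>S. revlex_le \<alpha> \<mu>"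
    by auto
  show ?case
  proof (cases "revlex_less \<mu> \<beta>")
    case True
    then show ?thesis
      using \<mu> revlex_less_trans by auto
  next
    case False
    then have "revlex_le \<beta> \<mu>"
      using revlex_less_total[of n \<beta> \<mu>] insert.prems \<mu>(1) by auto
    then show ?thesis
      using \<mu> by auto
  qed
qed simp

lemma revlex_le_zero: "revlex_le \<alpha> 0 \<Longrightarrow> \<alpha> = 0"
  by (auto simp: revlex_less_def)

lemma revlex_double_leading:
  assumes "bounded_index n \<alpha>" "bounded_index n \<beta>" "revlex_le \<alpha> \<mu>" "revlex_le \<beta> \<mu>"
    and "\<mu> + \<mu> \<le> \<alpha> + \<beta>"
  shows "\<alpha> = \<mu> \<and> \<beta> = \<mu>"
proof (rule ccontr)
  assume "\<not> (\<alpha> = \<mu> \<and> \<beta> = \<mu>)"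
  then have "revlex_less (\<alpha> + \<beta>) (\<mu> + \<mu>)"
    using assms(3,4) revlex_less_add by blast
  moreover have "revlex_le (\<mu> + \<mu>) (\<alpha> + \<beta>)"
    using assms(5) revlex_less_if_less[OF bounded_index_add[OF assms(1,2)]] by (auto simp: le_less)
  ultimately show False
    using revlex_less_trans revlex_less_irrefl by metis
qed

section \<open>Leading terms and scalar entries\<close>

lemma sum_fun_apply: "(\<Sum>a\<in>A. f a) x = (\<Sum>a\<in>A. f a x)"
  by (induction A rule: infinite_finite_induct) auto

lemma ascal_apply: "ascal c \<gamma> = (if \<gamma> = 0 then c else 0)"
  by (simp add: ascal_def zero_fun_def)

lemma Aelem_bounded_index: "Aelem n f \<Longrightarrow> f \<alpha> \<noteq> 0 \<Longrightarrow> bounded_index n \<alpha>"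
  by (simp add: Aelem_def bounded_index_def)

lemma ncoeff_nonzero_imp:
  assumes "ncoeff \<theta> n \<alpha> \<beta> \<gamma> \<noteq> 0"
  shows "\<gamma> \<le> \<alpha> + \<beta> \<and> bounded_index n \<gamma>"
proof -
  have C: "(\<forall>i\<ge>2*n. \<gamma> i = 0) \<and>
        (\<forall>m<n. \<gamma> (2*m) \<le> \<alpha> (2*m) + \<beta> (2*m) \<and>
               \<gamma> (2*m+1) + (\<alpha> (2*m) + \<beta> (2*m) - \<gamma> (2*m)) = \<alpha> (2*m+1) + \<beta> (2*m+1))"
    using assms unfolding ncoeff_def by (auto split: if_splits)
  have "\<gamma> i \<le> \<alpha> i + \<beta> i" for i
  proof (cases "2*n \<le> i")
    case False
    define m where "m = i div 2"
    have m: "m < n"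
      using False m_def by simp
    show ?thesis
    proof (cases "even i")
      case True
      then have "i = 2*m"
        using m_def by simp
      then show ?thesis
        using C m by simp
    next
      case False
      then have i: "i = 2*m + 1"
        using m_def by presburger
      have "\<gamma> (2*m+1) + (\<alpha> (2*m) + \<beta> (2*m) - \<gamma> (2*m)) = \<alpha> (2*m+1) + \<beta> (2*m+1)"
        using C m by blast
      then show ?thesis
        unfolding i by (metis le_add1)
    qed
  qed (use C in simp)
  then show ?thesis
    using C by (simp add: le_fun_def bounded_index_def)
qed

lemma ncoeff_leading:
  assumes "bounded_index n \<alpha>" "bounded_index n \<beta>"
  shows "ncoeff \<theta> n \<alpha> \<beta> (\<alpha> + \<beta>) = 1"
  using assms by (simp add: ncoeff_def bounded_index_def Let_def)

text \<open>Indices are 0-based, so odd_part collects the exponents of x_2, x_4, ..., which come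
  first in the reversed product (x^\<alpha>)^* used by astar.\<close>

definition odd_part :: "(nat \<Rightarrow> nat) \<Rightarrow> nat \<Rightarrow> nat" where
  "odd_part \<alpha> = (\<lambda>i. if odd i then \<alpha> i else 0)"

definition even_part :: "(nat \<Rightarrow> nat) \<Rightarrow> nat \<Rightarrow> nat" where
  "even_part \<alpha> = (\<lambda>i. if even i then \<alpha> i else 0)"

lemma odd_part_add_even_part: "odd_part \<alpha> + even_part \<alpha> = \<alpha>"
  by (auto simp: odd_part_def even_part_def)

lemma bounded_index_odd_part: "bounded_index n \<alpha> \<Longrightarrow> bounded_index n (odd_part \<alpha>)"
  and bounded_index_even_part: "bounded_index n \<alpha> \<Longrightarrow> bounded_index n (even_part \<alpha>)"
  by (simp_all add: bounded_index_def odd_part_def even_part_def)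

lemma amult_mono_mono: "amult \<theta> n (mono \<alpha>) (mono \<beta>) = ncoeff \<theta> n \<alpha> \<beta>"
proof -
  have "{\<gamma>. mono \<alpha> \<gamma> \<noteq> 0} = {\<alpha>}" for \<alpha>
    by (auto simp: mono_def)
  then show ?thesis
    by (simp add: amult_def mono_def)
qed

lemma astar_apply:
  "astar \<theta> n f \<gamma> = (\<Sum>\<alpha> | f \<alpha> \<noteq> 0. cnj (f \<alpha>) * ncoeff \<theta> n (odd_part \<alpha>) (even_part \<alpha>) \<gamma>)"
  by (simp add: astar_def sum_fun_apply amult_mono_mono odd_part_def even_part_def)

lemma astar_nonzero_imp:
  assumes "astar \<theta> n f \<gamma> \<noteq> 0"
  obtains \<alpha> where "f \<alpha> \<noteq> 0" "\<gamma> \<le> \<alpha>" "bounded_index n \<gamma>"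
proof -
  obtain \<alpha> where \<alpha>: "f \<alpha> \<noteq> 0" "cnj (f \<alpha>) * ncoeff \<theta> n (odd_part \<alpha>) (even_part \<alpha>) \<gamma> \<noteq> 0"
    using sum.not_neutral_contains_not_neutral[OF assms[unfolded astar_apply]] by blast
  then have "ncoeff \<theta> n (odd_part \<alpha>) (even_part \<alpha>) \<gamma> \<noteq> 0"
    by simp
  from ncoeff_nonzero_imp[OF this] have "\<gamma> \<le> \<alpha> \<and> bounded_index n \<gamma>"
    by (simp only: odd_part_add_even_part)
  with \<alpha>(1) that show ?thesis
    by blast
qed

lemma Aelem_astar:
  assumes f: "Aelem n f"
  shows "Aelem n (astar \<theta> n f)"
proof -
  let ?below = "\<Union>\<alpha>\<in>{\<alpha>. f \<alpha> \<noteq> 0}. {\<gamma>. \<gamma> \<le> \<alpha> \<and> bounded_index n \<gamma>}"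
  have supp: "\<gamma> \<in> ?below" if nz: "astar \<theta> n f \<gamma> \<noteq> 0" for \<gamma>
  proof -
    obtain \<alpha> where "f \<alpha> \<noteq> 0" "\<gamma> \<le> \<alpha>" "bounded_index n \<gamma>"
      using nz by (rule astar_nonzero_imp)
    then show ?thesis
      by blast
  qed
  have "finite ?below"
    using f by (intro finite_UN_I finite_bounded_index_le) (simp add: Aelem_def)
  then have "finite {\<gamma>. astar \<theta> n f \<gamma> \<noteq> 0}"
    by (rule finite_subset[rotated]) (use supp in blast)
  moreover have "\<forall>i\<ge>2*n. \<gamma> i = 0" if "astar \<theta> n f \<gamma> \<noteq> 0" for \<gamma>
    using supp[OF that] by (simp add: bounded_index_def)
  ultimately show ?thesis
    by (simp add: Aelem_def)
qed

lemma astar_revlex_le: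
  assumes "Aelem n f" "\<forall>\<alpha>. f \<alpha> \<noteq> 0 \<longrightarrow> revlex_le \<alpha> \<mu>" "astar \<theta> n f \<gamma> \<noteq> 0"
  shows "revlex_le \<gamma> \<mu>"
proof -
  obtain \<alpha> where \<alpha>: "f \<alpha> \<noteq> 0" "\<gamma> \<le> \<alpha>"
    using assms(3) by (rule astar_nonzero_imp)
  then have "revlex_le \<gamma> \<alpha>"
    using revlex_less_if_less[OF Aelem_bounded_index[OF assms(1)]] by (auto simp: le_less)
  then show ?thesis
    using assms(2) \<alpha>(1) revlex_le_trans by blast
qed

lemma astar_leading:
  assumes f: "Aelem n f" and below: "\<forall>\<alpha>. f \<alpha> \<noteq> 0 \<longrightarrow> revlex_le \<alpha> \<mu>" and \<mu>: "bounded_index n \<mu>"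
  shows "astar \<theta> n f \<mu> = cnj (f \<mu>)"
proof -
  have coeff: "cnj (f \<alpha>) * ncoeff \<theta> n (odd_part \<alpha>) (even_part \<alpha>) \<mu> = (if \<alpha> = \<mu> then cnj (f \<mu>) else 0)"
    if "f \<alpha> \<noteq> 0" for \<alpha>
  proof (cases "\<alpha> = \<mu>")
    case True
    then show ?thesis
      using ncoeff_leading[OF bounded_index_odd_part[OF \<mu>] bounded_index_even_part[OF \<mu>]]
      by (simp add: odd_part_add_even_part)
  next
    case False
    have "ncoeff \<theta> n (odd_part \<alpha>) (even_part \<alpha>) \<mu> = 0"
    proof (rule ccontr)
      assume "ncoeff \<theta> n (odd_part \<alpha>) (even_part \<alpha>) \<mu> \<noteq> 0"
      then have "\<mu> < \<alpha>"
        using ncoeff_nonzero_imp False by (metis odd_part_add_even_part order_le_neq_trans)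
      then have "revlex_less \<mu> \<alpha>"
        using revlex_less_if_less[OF Aelem_bounded_index[OF f that]] by simp
      then show False
        using below that False revlex_less_trans revlex_less_irrefl by blast
    qed
    then show ?thesis
      using False by simp
  qed
  have "finite {\<alpha>. f \<alpha> \<noteq> 0}"
    using f by (simp add: Aelem_def)
  moreover have "astar \<theta> n f \<mu> = (\<Sum>\<alpha> | f \<alpha> \<noteq> 0. if \<alpha> = \<mu> then cnj (f \<mu>) else 0)"
    unfolding astar_apply by (rule sum.cong) (simp_all add: coeff)
  ultimately show ?thesis
    by auto
qed

lemma amult_leading:
  assumes f: "Aelem n f" and g: "Aelem n g"
    and f_below: "\<forall>\<alpha>. f \<alpha> \<noteq> 0 \<longrightarrow> revlex_le \<alpha> \<mu>" and g_below: "\<forall>\<beta>. g \<beta> \<noteq> 0 \<longrightarrow> revlex_le \<beta> \<mu>"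
    and \<mu>: "bounded_index n \<mu>"
  shows "amult \<theta> n f g (\<mu> + \<mu>) = f \<mu> * g \<mu>"
proof -
  have coeff: "f \<alpha> * g \<beta> * ncoeff \<theta> n \<alpha> \<beta> (\<mu> + \<mu>) = (if \<alpha> = \<mu> \<and> \<beta> = \<mu> then f \<mu> * g \<mu> else 0)"
    if "f \<alpha> \<noteq> 0" "g \<beta> \<noteq> 0" for \<alpha> \<beta>
  proof (cases "ncoeff \<theta> n \<alpha> \<beta> (\<mu> + \<mu>) = 0")
    case False
    then have "\<alpha> = \<mu> \<and> \<beta> = \<mu>"
      using revlex_double_leading[OF Aelem_bounded_index[OF f] Aelem_bounded_index[OF g]]
        ncoeff_nonzero_imp that f_below g_below by blast
    then show ?thesis
      using ncoeff_leading[OF \<mu> \<mu>] by simp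
  qed (use ncoeff_leading[OF \<mu> \<mu>] in auto)
  have fin: "finite {\<alpha>. f \<alpha> \<noteq> 0}" "finite {\<beta>. g \<beta> \<noteq> 0}"
    using f g by (simp_all add: Aelem_def)
  have "amult \<theta> n f g (\<mu> + \<mu>) =
      (\<Sum>\<alpha> | f \<alpha> \<noteq> 0. \<Sum>\<beta> | g \<beta> \<noteq> 0. if \<alpha> = \<mu> \<and> \<beta> = \<mu> then f \<mu> * g \<mu> else 0)"
    unfolding amult_def by (intro sum.cong) (simp_all add: coeff)
  also have "\<dots> = (\<Sum>\<alpha> | f \<alpha> \<noteq> 0. if \<alpha> = \<mu> then f \<mu> * g \<mu> else 0)"
    by (rule sum.cong) (use fin(2) in auto)
  also have "\<dots> = f \<mu> * g \<mu>"
    using fin(1) by auto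
  finally show ?thesis .
qed

lemma sum_mult_astar_leading:
  fixes k :: nat
  assumes "\<forall>l<k. Aelem n (f l)" "\<forall>l<k. \<forall>\<alpha>. f l \<alpha> \<noteq> 0 \<longrightarrow> revlex_le \<alpha> \<mu>" "bounded_index n \<mu>"
  shows "(\<Sum>l<k. amult \<theta> n (f l) (astar \<theta> n (f l)) (\<mu> + \<mu>)) = of_real (\<Sum>l<k. (cmod (f l \<mu>))\<^sup>2)"
proof -
  have "(\<Sum>l<k. amult \<theta> n (f l) (astar \<theta> n (f l)) (\<mu> + \<mu>)) = (\<Sum>l<k. f l \<mu> * cnj (f l \<mu>))"
  proof (rule sum.cong)
    fix l assume "l \<in> {..<k}"
    then have l: "Aelem n (f l)" "\<forall>\<alpha>. f l \<alpha> \<noteq> 0 \<longrightarrow> revlex_le \<alpha> \<mu>"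
      using assms(1,2) by auto
    then show "amult \<theta> n (f l) (astar \<theta> n (f l)) (\<mu> + \<mu>) = f l \<mu> * cnj (f l \<mu>)"
      using amult_leading[OF l(1) Aelem_astar[OF l(1)] l(2) _ assms(3)]
        astar_revlex_le[OF l] astar_leading[OF l assms(3)] by simp
  qed simp
  also have "\<dots> = of_real (\<Sum>l<k. (cmod (f l \<mu>))\<^sup>2)"
    unfolding of_real_sum by (simp add: complex_norm_square[symmetric])
  finally show ?thesis .
qed

lemma revlex_bound_attained_imp_zero:
  fixes k :: nat
  assumes A: "\<forall>l<k. Aelem n (f l)"
    and supp: "\<forall>\<gamma>. (\<Sum>l<k. amult \<theta> n (f l) (astar \<theta> n (f l)) \<gamma>) \<noteq> 0 \<longrightarrow> \<gamma> = 0 \<or> (\<exists>l<k. f l \<gamma> \<noteq> 0)"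
    and below: "\<forall>l<k. \<forall>\<alpha>. f l \<alpha> \<noteq> 0 \<longrightarrow> revlex_le \<alpha> \<mu>" and \<mu>: "bounded_index n \<mu>"
    and l0: "l0 < k" "f l0 \<mu> \<noteq> 0"
  shows "\<mu> = 0"
proof (rule ccontr)
  assume "\<mu> \<noteq> 0"
  have "(\<Sum>l<k. amult \<theta> n (f l) (astar \<theta> n (f l)) (\<mu> + \<mu>)) = of_real (\<Sum>l<k. (cmod (f l \<mu>))\<^sup>2)"
    by (rule sum_mult_astar_leading[OF A below \<mu>])
  also have "\<dots> \<noteq> 0"
  proof -
    have "0 < (\<Sum>l<k. (cmod (f l \<mu>))\<^sup>2)"
      by (rule sum_pos2[of _ l0]) (use l0 in auto)
    then show ?thesis
      by (metis of_real_eq_0_iff less_irrefl)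
  qed
  finally have "(\<Sum>l<k. amult \<theta> n (f l) (astar \<theta> n (f l)) (\<mu> + \<mu>)) \<noteq> 0" .
  moreover have "\<mu> + \<mu> \<noteq> 0"
    using \<open>\<mu> \<noteq> 0\<close> by (auto simp: fun_eq_iff)
  ultimately have "revlex_le (\<mu> + \<mu>) \<mu>"
    using supp below by blast
  moreover have "\<mu> < \<mu> + \<mu>"
    using \<open>\<mu> \<noteq> 0\<close> by (auto simp: less_fun_def le_fun_def fun_eq_iff)
  then have "revlex_less \<mu> (\<mu> + \<mu>)"
    using revlex_less_if_less[OF bounded_index_add[OF \<mu> \<mu>]] by blast
  ultimately show False
    using revlex_less_trans[of \<mu> "\<mu> + \<mu>" \<mu>] revlex_less_irrefl[of \<mu>] by auto
qed

lemma scalar_if_sum_mult_astar_supported: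
  fixes k :: nat
  assumes A: "\<forall>l<k. Aelem n (f l)"
    and supp: "\<forall>\<gamma>. (\<Sum>l<k. amult \<theta> n (f l) (astar \<theta> n (f l)) \<gamma>) \<noteq> 0 \<longrightarrow> \<gamma> = 0 \<or> (\<exists>l<k. f l \<gamma> \<noteq> 0)"
  shows "\<forall>l<k. f l = ascal (f l 0)"
proof -
  define S where "S = insert 0 (\<Union>l<k. {\<alpha>. f l \<alpha> \<noteq> 0})"
  have "finite S"
    unfolding S_def using A by (auto simp: Aelem_def intro!: finite_UN_I)
  moreover have bounded: "\<forall>\<alpha>\<in>S. bounded_index n \<alpha>"
    using A Aelem_bounded_index by (auto simp: S_def bounded_index_def)
  ultimately obtain \<mu> where \<mu>: "\<mu> \<in> S" "\<forall>\<alpha>\<in>S. revlex_le \<alpha> \<mu>"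
    using revlex_greatest[of S n] by (auto simp: S_def)
  have below: "\<forall>l<k. \<forall>\<alpha>. f l \<alpha> \<noteq> 0 \<longrightarrow> revlex_le \<alpha> \<mu>"
    using \<mu>(2) by (auto simp: S_def)
  have "\<mu> = 0"
    using revlex_bound_attained_imp_zero[OF A supp below bounded[rule_format, OF \<mu>(1)]] \<mu>(1)
    by (auto simp: S_def)
  show ?thesis
  proof (intro allI impI ext)
    fix l \<gamma> assume "l < k"
    then show "f l \<gamma> = ascal (f l 0) \<gamma>"
      using below revlex_le_zero \<open>\<mu> = 0\<close> by (cases "f l \<gamma> = 0") (auto simp: ascal_apply)
  qed
qed

section \<open>Projections over the complex numbers\<close>

lemma sum_lessThan_add: "(\<Sum>i<a + b. g i) = (\<Sum>i<a. g i) + (\<Sum>i<b. g (a + i))" for a b :: nat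
  by (induct b) (auto simp: add.assoc)

lemma sum_lessThan_restrict: "r \<le> k \<Longrightarrow> (\<Sum>d<k. if d < r then g d else 0) = (\<Sum>d<r. g d)" for r k :: nat
proof -
  assume "r \<le> k"
  then have "{d \<in> {..<k}. d < r} = {..<r}"
    by auto
  then show ?thesis
    using sum.inter_filter[of "{..<k}" g "\<lambda>d. d < r"] by simp
qed

definition cmult :: "nat \<Rightarrow> (nat \<Rightarrow> nat \<Rightarrow> complex) \<Rightarrow> (nat \<Rightarrow> nat \<Rightarrow> complex) \<Rightarrow> nat \<Rightarrow> nat \<Rightarrow> complex" where
  "cmult k A B = (\<lambda>i j. \<Sum>l<k. A i l * B l j)"

definition cadj :: "(nat \<Rightarrow> nat \<Rightarrow> complex) \<Rightarrow> nat \<Rightarrow> nat \<Rightarrow> complex" where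
  "cadj A = (\<lambda>i j. cnj (A j i))"

definition cid :: "nat \<Rightarrow> nat \<Rightarrow> complex" where
  "cid i j = (if i = j then 1 else 0)"

definition ctrace :: "nat \<Rightarrow> (nat \<Rightarrow> nat \<Rightarrow> complex) \<Rightarrow> complex" where
  "ctrace k A = (\<Sum>i<k. A i i)"

definition cproj :: "nat \<Rightarrow> (nat \<Rightarrow> nat \<Rightarrow> complex) \<Rightarrow> bool" where
  "cproj k P \<longleftrightarrow> (\<forall>i<k. \<forall>j<k. cmult k P P i j = P i j \<and> cnj (P j i) = P i j)"

definition cunitary :: "nat \<Rightarrow> (nat \<Rightarrow> nat \<Rightarrow> complex) \<Rightarrow> bool" where
  "cunitary k U \<longleftrightarrow> (\<forall>i<k. \<forall>j<k. cmult k U (cadj U) i j = cid i j \<and> cmult k (cadj U) U i j = cid i j)"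

definition cinner :: "nat \<Rightarrow> (nat \<Rightarrow> complex) \<Rightarrow> (nat \<Rightarrow> complex) \<Rightarrow> complex" where
  "cinner k u v = (\<Sum>i<k. cnj (u i) * v i)"

definition orthonormal :: "nat \<Rightarrow> nat \<Rightarrow> (nat \<Rightarrow> nat \<Rightarrow> complex) \<Rightarrow> bool" where
  "orthonormal k r w \<longleftrightarrow> (\<forall>a<r. \<forall>b<r. cinner k (w a) (w b) = cid a b)"

definition rank_one_sum :: "nat \<Rightarrow> (nat \<Rightarrow> nat \<Rightarrow> complex) \<Rightarrow> nat \<Rightarrow> nat \<Rightarrow> complex" where
  "rank_one_sum r w = (\<lambda>i j. \<Sum>a<r. w a i * cnj (w a j))"

lemma sum_cid_mult: "i < k \<Longrightarrow> (\<Sum>l<k. cid i l * g l) = g i"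
proof -
  assume "i < k"
  moreover have "(\<Sum>l<k. cid i l * g l) = (\<Sum>l<k. if i = l then g l else 0)"
    unfolding cid_def by (intro sum.cong) auto
  ultimately show ?thesis
    by simp
qed

lemma sum_mult_cid: "j < k \<Longrightarrow> (\<Sum>l<k. g l * cid l j) = g j"
proof -
  assume "j < k"
  moreover have "(\<Sum>l<k. g l * cid l j) = (\<Sum>l<k. if l = j then g l else 0)"
    unfolding cid_def by (intro sum.cong) auto
  ultimately show ?thesis
    by simp
qed

lemma cinner_commute: "cinner k v u = cnj (cinner k u v)"
  by (simp add: cinner_def mult.commute)

lemma sum_mult_orthonormal:
  assumes "orthonormal k r w"
  shows "(\<Sum>l<k. (\<Sum>c<r. A c * cnj (w c l)) * (\<Sum>d<r. w d l * B d)) = (\<Sum>c<r. A c * B c)"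
proof -
  have "(\<Sum>l<k. (\<Sum>c<r. A c * cnj (w c l)) * (\<Sum>d<r. w d l * B d))
      = (\<Sum>l<k. \<Sum>c<r. \<Sum>d<r. A c * B d * (cnj (w c l) * w d l))"
    by (simp add: sum_distrib_left sum_distrib_right algebra_simps)
  also have "\<dots> = (\<Sum>c<r. \<Sum>l<k. \<Sum>d<r. A c * B d * (cnj (w c l) * w d l))"
    by (rule sum.swap)
  also have "\<dots> = (\<Sum>c<r. \<Sum>d<r. \<Sum>l<k. A c * B d * (cnj (w c l) * w d l))"
    by (intro sum.cong refl sum.swap)
  also have "\<dots> = (\<Sum>c<r. \<Sum>d<r. A c * B d * cinner k (w c) (w d))"
    by (simp add: sum_distrib_left cinner_def)
  also have "\<dots> = (\<Sum>c<r. \<Sum>d<r. if d = c then A c * B c else 0)"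
    using assms unfolding orthonormal_def cid_def by (intro sum.cong refl) auto
  finally show ?thesis
    by simp
qed

lemma ctrace_unitary_conj:
  assumes "cunitary k U"
  shows "ctrace k (cmult k (cmult k U Z) (cadj U)) = ctrace k Z"
proof -
  have "ctrace k (cmult k (cmult k U Z) (cadj U)) = (\<Sum>i<k. \<Sum>l<k. \<Sum>m<k. U i m * Z m l * cnj (U i l))"
    unfolding ctrace_def cmult_def cadj_def by (simp add: sum_distrib_right)
  also have "\<dots> = (\<Sum>l<k. \<Sum>i<k. \<Sum>m<k. U i m * Z m l * cnj (U i l))"
    by (rule sum.swap)
  also have "\<dots> = (\<Sum>l<k. \<Sum>m<k. \<Sum>i<k. U i m * Z m l * cnj (U i l))"
    by (intro sum.cong refl sum.swap)
  also have "\<dots> = (\<Sum>m<k. \<Sum>l<k. \<Sum>i<k. U i m * Z m l * cnj (U i l))"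
    by (rule sum.swap)
  also have "\<dots> = (\<Sum>m<k. \<Sum>l<k. Z m l * cmult k (cadj U) U l m)"
    by (simp add: cmult_def cadj_def sum_distrib_left algebra_simps)
  also have "\<dots> = (\<Sum>m<k. \<Sum>l<k. Z m l * cid l m)"
    using assms unfolding cunitary_def by (intro sum.cong refl) auto
  finally show ?thesis
    by (simp add: ctrace_def sum_mult_cid)
qed

lemma cproj_hermitian: "cproj k P \<Longrightarrow> i < k \<Longrightarrow> j < k \<Longrightarrow> cnj (P i j) = P j i"
  unfolding cproj_def by auto

lemma ctrace_cproj_nonneg:
  assumes "cproj k P"
  shows "0 \<le> Re (ctrace k P)"
proof -
  have "ctrace k P = (\<Sum>i<k. \<Sum>l<k. P i l * P l i)"
    unfolding ctrace_def using assms unfolding cproj_def cmult_def by (intro sum.cong refl) auto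
  also have "\<dots> = (\<Sum>i<k. \<Sum>l<k. P i l * cnj (P i l))"
    using cproj_hermitian[OF assms] by (intro sum.cong refl) auto
  also have "\<dots> = of_real (\<Sum>i<k. \<Sum>l<k. (cmod (P i l))\<^sup>2)"
    unfolding of_real_sum complex_norm_square ..
  finally show ?thesis
    by (simp add: sum_nonneg)
qed

lemma rank_one_sum_fixes:
  assumes w: "orthonormal k r w" and Q: "\<forall>i<k. \<forall>j<k. Q i j = rank_one_sum r w i j"
    and "a < r" "i < k"
  shows "(\<Sum>l<k. Q i l * w a l) = w a i"
proof -
  have "(\<Sum>l<k. Q i l * w a l) = (\<Sum>l<k. (\<Sum>b<r. w b i * cnj (w b l)) * (\<Sum>d<r. w d l * cid d a))"
    using Q assms(3,4) by (intro sum.cong refl) (simp add: rank_one_sum_def sum_mult_cid)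
  also have "\<dots> = (\<Sum>c<r. w c i * cid c a)"
    by (rule sum_mult_orthonormal[OF w])
  finally show ?thesis
    using assms(3) by (simp add: sum_mult_cid)
qed

lemma orthonormal_orthogonal_kernel:
  assumes w: "orthonormal k r w" and Q: "\<forall>i<k. \<forall>j<k. Q i j = rank_one_sum r w i j"
    and herm: "\<forall>i<k. \<forall>j<k. cnj (Q i j) = Q j i"
    and Qu: "\<forall>i<k. (\<Sum>l<k. Q i l * u l) = 0" and a: "a < r"
  shows "cinner k (w a) u = 0"
proof -
  have "cinner k (w a) u = (\<Sum>i<k. cnj (\<Sum>l<k. Q i l * w a l) * u i)"
    unfolding cinner_def using rank_one_sum_fixes[OF w Q a] by simp
  also have "\<dots> = (\<Sum>i<k. \<Sum>l<k. Q l i * cnj (w a l) * u i)"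
    using herm by (simp add: sum_distrib_right)
  also have "\<dots> = (\<Sum>l<k. \<Sum>i<k. Q l i * cnj (w a l) * u i)"
    by (rule sum.swap)
  also have "\<dots> = (\<Sum>l<k. cnj (w a l) * (\<Sum>i<k. Q l i * u i))"
    by (simp add: sum_distrib_left algebra_simps)
  also have "\<dots> = 0"
    using Qu by simp
  finally show ?thesis .
qed

lemma orthonormal_append:
  assumes x: "orthonormal k r x" and y: "orthonormal k s y"
    and perp: "\<forall>a<r. \<forall>b<s. cinner k (x a) (y b) = 0"
  shows "orthonormal k (r + s) (\<lambda>c. if c < r then x c else y (c - r))"
  unfolding orthonormal_def
proof (intro allI impI)
  fix a b assume "a < r + s" "b < r + s"
  then consider "a < r" "b < r" | "a < r" "\<not> b < r" | "\<not> a < r" "b < r" | "\<not> a < r" "\<not> b < r"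
    by blast
  then show "cinner k (if a < r then x a else y (a - r)) (if b < r then x b else y (b - r)) = cid a b"
  proof cases
    case 1
    then show ?thesis
      using x by (simp add: orthonormal_def)
  next
    case 2
    then show ?thesis
      using perp \<open>b < r + s\<close> by (simp add: cid_def)
  next
    case 3
    then show ?thesis
      using perp \<open>a < r + s\<close> cinner_commute[of k "y (a - r)" "x b"] by (simp add: cid_def)
  next
    case 4
    then have "cid (a - r) (b - r) = cid a b"
      by (auto simp: cid_def)
    then show ?thesis
      using y 4 \<open>a < r + s\<close> \<open>b < r + s\<close> by (simp add: orthonormal_def)
  qed
qed

lemma rank_one_sum_append:
  "rank_one_sum (r + s) (\<lambda>c. if c < r then x c else y (c - r)) i j = rank_one_sum r x i j + rank_one_sum s y i j"
  unfolding rank_one_sum_def sum_lessThan_add by simp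

lemma orthonormal_snoc:
  assumes w: "orthonormal k r w" and uu: "cinner k u u = 1" and perp: "\<forall>a<r. cinner k (w a) u = 0"
  shows "orthonormal k (r + 1) (\<lambda>c. if c < r then w c else u)"
    and "rank_one_sum (r + 1) (\<lambda>c. if c < r then w c else u) i j = rank_one_sum r w i j + u i * cnj (u j)"
proof -
  have "orthonormal k 1 (\<lambda>_. u)"
    using uu by (simp add: orthonormal_def cid_def)
  then show "orthonormal k (r + 1) (\<lambda>c. if c < r then w c else u)"
    using orthonormal_append[OF w, of 1 "\<lambda>_. u"] perp by simp
  show "rank_one_sum (r + 1) (\<lambda>c. if c < r then w c else u) i j = rank_one_sum r w i j + u i * cnj (u j)"
    using rank_one_sum_append[of r 1 w "\<lambda>_. u" i j] by (simp add: rank_one_sum_def)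
qed

lemma ctrace_rank_one_sum:
  assumes w: "orthonormal k r w" and P: "\<forall>i<k. \<forall>j<k. P i j = rank_one_sum r w i j"
  shows "ctrace k P = of_nat r"
proof -
  have "ctrace k P = (\<Sum>i<k. \<Sum>a<r. cnj (w a i) * w a i)"
    unfolding ctrace_def using P by (simp add: rank_one_sum_def mult.commute)
  also have "\<dots> = (\<Sum>a<r. cinner k (w a) (w a))"
    unfolding cinner_def by (rule sum.swap)
  also have "\<dots> = (\<Sum>a<r. 1)"
    using w by (simp add: orthonormal_def cid_def)
  finally show ?thesis
    by simp
qed

lemma cproj_minus_rank_one:
  assumes P: "cproj k P" and uu: "cinner k u u = 1" and Pu: "\<forall>i<k. (\<Sum>l<k. P i l * u l) = u i"
  defines "P' \<equiv> (\<lambda>i j. P i j - u i * cnj (u j))"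
  shows "cproj k P'" "ctrace k P' = ctrace k P - 1" "\<forall>i<k. (\<Sum>l<k. P' i l * u l) = 0"
proof -
  have uu': "(\<Sum>l<k. cnj (u l) * u l) = 1"
    using uu by (simp add: cinner_def)
  have uP: "(\<Sum>l<k. cnj (u l) * P l j) = cnj (u j)" if j: "j < k" for j
  proof -
    have "(\<Sum>l<k. cnj (u l) * P l j) = (\<Sum>l<k. cnj (P j l * u l))"
      using cproj_hermitian[OF P j] by (intro sum.cong refl) (auto simp: mult.commute)
    also have "\<dots> = cnj (\<Sum>l<k. P j l * u l)"
      by simp
    also have "\<dots> = cnj (u j)"
      using Pu j by simp
    finally show ?thesis .
  qed
  have "cmult k P' P' i j = P' i j" if i: "i < k" and j: "j < k" for i j
  proof -
    have "cmult k P' P' i j = (\<Sum>l<k. P i l * P l j) - u i * (\<Sum>l<k. cnj (u l) * P l j)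
        - (\<Sum>l<k. P i l * u l) * cnj (u j) + u i * (\<Sum>l<k. cnj (u l) * u l) * cnj (u j)"
      unfolding cmult_def P'_def
      by (simp add: algebra_simps sum_subtractf sum_distrib_left sum_distrib_right sum.distrib)
    also have "\<dots> = P i j - u i * cnj (u j)"
      using P i j uu' Pu uP[OF j] unfolding cproj_def cmult_def by simp
    finally show ?thesis
      unfolding P'_def .
  qed
  moreover have "cnj (P' j i) = P' i j" if "i < k" "j < k" for i j
    unfolding P'_def using cproj_hermitian[OF P that(2,1)] by simp
  ultimately show "cproj k P'"
    unfolding cproj_def by blast
  show "ctrace k P' = ctrace k P - 1"
    using uu' unfolding ctrace_def P'_def by (simp add: sum_subtractf mult.commute)
  show "\<forall>i<k. (\<Sum>l<k. P' i l * u l) = 0"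
  proof (intro allI impI)
    fix i assume "i < k"
    have "(\<Sum>l<k. P' i l * u l) = (\<Sum>l<k. P i l * u l) - u i * (\<Sum>l<k. cnj (u l) * u l)"
      unfolding P'_def by (simp add: algebra_simps sum_subtractf sum_distrib_left)
    then show "(\<Sum>l<k. P' i l * u l) = 0"
      using Pu \<open>i < k\<close> uu' by simp
  qed
qed

text \<open>The witness is a nonzero column of P, normalised.\<close>

lemma cproj_unit_fixed_vector:
  assumes P: "cproj k P" and "i0 < k" "j0 < k" "P i0 j0 \<noteq> 0"
  obtains u where "cinner k u u = 1" "\<forall>i<k. (\<Sum>l<k. P i l * u l) = u i"
proof
  define s where "s = (\<Sum>i<k. (cmod (P i j0))\<^sup>2)"
  have "0 < s"
    unfolding s_def by (rule sum_pos2[of _ i0]) (use assms in auto)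
  define c where "c = complex_of_real (sqrt s)"
  have cc: "cnj c * c = of_real s"
    unfolding c_def using \<open>0 < s\<close> by (simp flip: of_real_mult)
  define u where "u = (\<lambda>i. P i j0 / c)"
  have "cinner k u u = (\<Sum>i<k. P i j0 * cnj (P i j0)) / (cnj c * c)"
    unfolding u_def cinner_def by (simp add: sum_divide_distrib mult.commute)
  also have "\<dots> = of_real s / of_real s"
    unfolding cc s_def of_real_sum complex_norm_square ..
  finally show "cinner k u u = 1"
    using \<open>0 < s\<close> by simp
  show "\<forall>i<k. (\<Sum>l<k. P i l * u l) = u i"
  proof (intro allI impI)
    fix i assume "i < k"
    have "(\<Sum>l<k. P i l * u l) = cmult k P P i j0 / c"
      unfolding u_def cmult_def by (simp add: sum_divide_distrib)
    also have "\<dots> = u i"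
      using P \<open>i < k\<close> \<open>j0 < k\<close> unfolding cproj_def u_def by simp
    finally show "(\<Sum>l<k. P i l * u l) = u i" .
  qed
qed

lemma cproj_rank_one_decomposition:
  assumes "cproj k P"
  obtains r w where "orthonormal k r w" "\<forall>i<k. \<forall>j<k. P i j = rank_one_sum r w i j"
proof -
  obtain N :: nat where "Re (ctrace k P) < real N"
    using reals_Archimedean2 by blast
  then have "\<exists>r w. orthonormal k r w \<and> (\<forall>i<k. \<forall>j<k. P i j = rank_one_sum r w i j)"
    using assms
  proof (induction N arbitrary: P)
    case 0
    then show ?case
      using ctrace_cproj_nonneg by force
  next
    case (Suc N)
    show ?case
    proof (cases "\<forall>i<k. \<forall>j<k. P i j = 0")
      case True
      then show ?thesis
        by (intro exI[of _ 0]) (simp add: orthonormal_def rank_one_sum_def)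
    next
      case False
      then obtain u where uu: "cinner k u u = 1" and Pu: "\<forall>i<k. (\<Sum>l<k. P i l * u l) = u i"
        using cproj_unit_fixed_vector[OF Suc.prems(2)] by blast
      define P' where "P' = (\<lambda>i j. P i j - u i * cnj (u j))"
      note P' = cproj_minus_rank_one[OF Suc.prems(2) uu Pu, folded P'_def]
      obtain r w where w: "orthonormal k r w" and P'w: "\<forall>i<k. \<forall>j<k. P' i j = rank_one_sum r w i j"
        using Suc.IH[OF _ P'(1)] P'(2) Suc.prems(1) by auto
      have P'u: "\<forall>i<k. (\<Sum>l<k. P' i l * u l) = 0"
        using P'(3) by (simp add: P'_def)
      have "\<forall>a<r. cinner k (w a) u = 0"
        using orthonormal_orthogonal_kernel[OF w P'w _ P'u] cproj_hermitian[OF P'(1)] by blast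
      note snoc = orthonormal_snoc[OF w uu this]
      have "P i j = rank_one_sum (r + 1) (\<lambda>c. if c < r then w c else u) i j" if "i < k" "j < k" for i j
        unfolding snoc(2) using P'w that by (simp add: P'_def algebra_simps)
      then show ?thesis
        using snoc(1) by blast
    qed
  qed
  then show ?thesis
    using that by blast
qed

lemma cproj_complement:
  assumes X: "cproj k X"
  shows "cproj k (\<lambda>i j. cid i j - X i j)" "ctrace k (\<lambda>i j. cid i j - X i j) = of_nat k - ctrace k X"
proof -
  have "cmult k (\<lambda>i j. cid i j - X i j) (\<lambda>i j. cid i j - X i j) i j = cid i j - X i j"
    if i: "i < k" and j: "j < k" for i j
  proof -
    have "cmult k (\<lambda>i j. cid i j - X i j) (\<lambda>i j. cid i j - X i j) i j
       = (\<Sum>l<k. cid i l * cid l j) - (\<Sum>l<k. cid i l * X l j) - (\<Sum>l<k. X i l * cid l j)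
         + (\<Sum>l<k. X i l * X l j)"
      unfolding cmult_def by (simp add: algebra_simps sum_subtractf sum.distrib)
    also have "\<dots> = cid i j - X i j - X i j + X i j"
      using sum_cid_mult[OF i] sum_mult_cid[OF j] X i j unfolding cproj_def cmult_def by simp
    finally show ?thesis
      by simp
  qed
  moreover have "cnj (cid j i - X j i) = cid i j - X i j" if "i < k" "j < k" for i j
    using cproj_hermitian[OF X that(2,1)] by (simp add: cid_def)
  ultimately show "cproj k (\<lambda>i j. cid i j - X i j)"
    unfolding cproj_def by blast
  show "ctrace k (\<lambda>i j. cid i j - X i j) = of_nat k - ctrace k X"
    unfolding ctrace_def by (simp add: sum_subtractf cid_def)
qed

lemma complement_rank_one_sum_kernel:
  assumes y: "orthonormal k s y" and Xy: "\<forall>i<k. \<forall>j<k. cid i j - X i j = rank_one_sum s y i j"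
    and "b < s"
  shows "\<forall>i<k. (\<Sum>l<k. X i l * y b l) = 0"
proof (intro allI impI)
  fix i assume i: "i < k"
  have "(\<Sum>l<k. (cid i l - X i l) * y b l) = y b i"
    by (rule rank_one_sum_fixes[OF y _ \<open>b < s\<close> i]) (use Xy in auto)
  then have "(\<Sum>l<k. cid i l * y b l) - (\<Sum>l<k. X i l * y b l) = y b i"
    by (simp add: algebra_simps sum_subtractf)
  then show "(\<Sum>l<k. X i l * y b l) = 0"
    using sum_cid_mult[OF i] by simp
qed

text \<open>Append rank-one decompositions of X and of its complement.\<close>

lemma cproj_orthonormal_basis:
  assumes X: "cproj k X"
  obtains r e where "orthonormal k k e" "\<forall>i<k. \<forall>j<k. rank_one_sum k e i j = cid i j"
    "\<forall>i<k. \<forall>j<k. X i j = rank_one_sum r e i j" "ctrace k X = of_nat r" "r \<le> k"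
proof -
  obtain r x where x: "orthonormal k r x" and Xx: "\<forall>i<k. \<forall>j<k. X i j = rank_one_sum r x i j"
    using cproj_rank_one_decomposition[OF X] by blast
  obtain s y where y: "orthonormal k s y"
    and Xy: "\<forall>i<k. \<forall>j<k. cid i j - X i j = rank_one_sum s y i j"
    using cproj_rank_one_decomposition[OF cproj_complement(1)[OF X]] by blast
  have tr: "ctrace k X = of_nat r"
    by (rule ctrace_rank_one_sum[OF x Xx])
  have "ctrace k (\<lambda>i j. cid i j - X i j) = of_nat s"
    by (rule ctrace_rank_one_sum[OF y]) (use Xy in auto)
  then have "of_nat k = (of_nat (r + s) :: complex)"
    using cproj_complement(2)[OF X] tr by (simp add: algebra_simps)
  then have rs: "r + s = k"
    using of_nat_eq_iff by metis
  have "\<forall>a<r. \<forall>b<s. cinner k (x a) (y b) = 0"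
    using orthonormal_orthogonal_kernel[OF x Xx] complement_rank_one_sum_kernel[OF y Xy]
      cproj_hermitian[OF X] by blast
  define e where "e = (\<lambda>c. if c < r then x c else y (c - r))"
  have "orthonormal k k e"
    using orthonormal_append[OF x y] \<open>\<forall>a<r. \<forall>b<s. cinner k (x a) (y b) = 0\<close> rs e_def by simp
  moreover have "\<forall>i<k. \<forall>j<k. rank_one_sum k e i j = cid i j"
  proof (intro allI impI)
    fix i j assume "i < k" "j < k"
    have "rank_one_sum r x i j + rank_one_sum s y i j = X i j + (cid i j - X i j)"
      using Xx Xy \<open>i < k\<close> \<open>j < k\<close> by simp
    then show "rank_one_sum k e i j = cid i j"
      using rank_one_sum_append[of r s x y i j] rs unfolding e_def by simp
  qed
  moreover have "\<forall>i<k. \<forall>j<k. X i j = rank_one_sum r e i j"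
    using Xx by (simp add: e_def rank_one_sum_def)
  ultimately show ?thesis
    using that tr rs by simp
qed

definition basis_change :: "nat \<Rightarrow> (nat \<Rightarrow> nat \<Rightarrow> complex) \<Rightarrow> (nat \<Rightarrow> nat \<Rightarrow> complex) \<Rightarrow> nat \<Rightarrow> nat \<Rightarrow> complex" where
  "basis_change k e f = (\<lambda>i j. \<Sum>c<k. e c i * cnj (f c j))"

lemma cnj_basis_change: "cnj (basis_change k e f j l) = (\<Sum>d<k. f d l * cnj (e d j))"
  by (simp add: basis_change_def mult.commute)

lemma cunitary_basis_change:
  assumes e: "orthonormal k k e" "\<forall>i<k. \<forall>j<k. rank_one_sum k e i j = cid i j"
    and f: "orthonormal k k f" "\<forall>i<k. \<forall>j<k. rank_one_sum k f i j = cid i j"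
  shows "cunitary k (basis_change k e f)"
proof -
  have "cmult k (basis_change k e f) (cadj (basis_change k e f)) i j = rank_one_sum k e i j" for i j
    unfolding cmult_def cadj_def cnj_basis_change unfolding basis_change_def rank_one_sum_def
    by (rule sum_mult_orthonormal[OF f(1)])
  moreover have "cmult k (cadj (basis_change k e f)) (basis_change k e f) i j = rank_one_sum k f i j" for i j
    unfolding cmult_def cadj_def cnj_basis_change unfolding basis_change_def rank_one_sum_def
    by (rule sum_mult_orthonormal[OF e(1)])
  ultimately show ?thesis
    using e(2) f(2) by (simp add: cunitary_def)
qed

lemma basis_change_conj:
  assumes f: "orthonormal k k f" and "r \<le> k" and Y: "\<forall>i<k. \<forall>j<k. Y i j = rank_one_sum r f i j"
    and i: "i < k" and j: "j < k"
  shows "cmult k (cmult k (basis_change k e f) Y) (cadj (basis_change k e f)) i j = rank_one_sum r e i j"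
proof -
  let ?U = "basis_change k e f"
  have UY: "cmult k ?U Y i m = (\<Sum>c<k. (e c i * (if c < r then 1 else 0)) * cnj (f c m))" if m: "m < k" for m
  proof -
    have "cmult k ?U Y i m = (\<Sum>l<k. (\<Sum>c<k. e c i * cnj (f c l)) * (\<Sum>d<k. f d l * (if d < r then cnj (f d m) else 0)))"
      unfolding cmult_def basis_change_def
    proof (rule sum.cong[OF refl])
      fix l assume "l \<in> {..<k}"
      then have "Y l m = (\<Sum>d<k. f d l * (if d < r then cnj (f d m) else 0))"
        using Y m sum_lessThan_restrict[OF \<open>r \<le> k\<close>, of "\<lambda>d. f d l * cnj (f d m)"]
        by (simp add: rank_one_sum_def if_distrib cong: if_cong)
      then show "(\<Sum>c<k. e c i * cnj (f c l)) * Y l m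
          = (\<Sum>c<k. e c i * cnj (f c l)) * (\<Sum>d<k. f d l * (if d < r then cnj (f d m) else 0))"
        by simp
    qed
    also have "\<dots> = (\<Sum>c<k. e c i * (if c < r then cnj (f c m) else 0))"
      by (rule sum_mult_orthonormal[OF f])
    also have "\<dots> = (\<Sum>c<k. (e c i * (if c < r then 1 else 0)) * cnj (f c m))"
      by (intro sum.cong refl) auto
    finally show ?thesis .
  qed
  have "cmult k (cmult k ?U Y) (cadj ?U) i j
      = (\<Sum>m<k. (\<Sum>c<k. (e c i * (if c < r then 1 else 0)) * cnj (f c m)) * (\<Sum>d<k. f d m * cnj (e d j)))"
    unfolding cmult_def[of k "cmult k ?U Y"] cadj_def cnj_basis_change using UY by (intro sum.cong refl) auto
  also have "\<dots> = (\<Sum>c<k. (e c i * (if c < r then 1 else 0)) * cnj (e c j))"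
    by (rule sum_mult_orthonormal[OF f])
  also have "\<dots> = (\<Sum>c<k. if c < r then e c i * cnj (e c j) else 0)"
    by (intro sum.cong refl) auto
  also have "\<dots> = rank_one_sum r e i j"
    using sum_lessThan_restrict[OF \<open>r \<le> k\<close>] by (simp add: rank_one_sum_def)
  finally show ?thesis .
qed

lemma cproj_unitarily_equivalent:
  assumes X: "cproj k X" and Y: "cproj k Y" and tr: "ctrace k X = ctrace k Y"
  obtains U where "cunitary k U" "\<forall>i<k. \<forall>j<k. X i j = cmult k (cmult k U Y) (cadj U) i j"
proof -
  obtain r e where e: "orthonormal k k e" and e_id: "\<forall>i<k. \<forall>j<k. rank_one_sum k e i j = cid i j"
    and Xe: "\<forall>i<k. \<forall>j<k. X i j = rank_one_sum r e i j" and trX: "ctrace k X = of_nat r" and "r \<le> k"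
    by (rule cproj_orthonormal_basis[OF X])
  obtain r' f where f: "orthonormal k k f" and f_id: "\<forall>i<k. \<forall>j<k. rank_one_sum k f i j = cid i j"
    and Yf: "\<forall>i<k. \<forall>j<k. Y i j = rank_one_sum r' f i j" and trY: "ctrace k Y = of_nat r'" and "r' \<le> k"
    by (rule cproj_orthonormal_basis[OF Y])
  have "r' = r"
    using trX trY tr by simp
  then have "\<forall>i<k. \<forall>j<k. X i j = cmult k (cmult k (basis_change k e f) Y) (cadj (basis_change k e f)) i j"
    using basis_change_conj[OF f \<open>r \<le> k\<close>] Yf Xe by simp
  then show ?thesis
    using that cunitary_basis_change[OF e e_id f f_id] by blast
qed

definition cblock :: "nat \<Rightarrow> (nat \<Rightarrow> nat \<Rightarrow> complex) \<Rightarrow> (nat \<Rightarrow> nat \<Rightarrow> complex) \<Rightarrow> nat \<Rightarrow> nat \<Rightarrow> complex" where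
  "cblock a A B = (\<lambda>i j. if i < a \<and> j < a then A i j else if a \<le> i \<and> a \<le> j then B (i - a) (j - a) else 0)"

lemma ctrace_cblock: "ctrace (a + b) (cblock a A B) = ctrace a A + ctrace b B"
  unfolding ctrace_def cblock_def sum_lessThan_add by simp

lemma cproj_cblock:
  assumes A: "cproj a A" and B: "cproj b B"
  shows "cproj (a + b) (cblock a A B)"
proof -
  have "cmult (a + b) (cblock a A B) (cblock a A B) i j = cblock a A B i j"
    if i: "i < a + b" and j: "j < a + b" for i j
  proof -
    have split: "cmult (a + b) (cblock a A B) (cblock a A B) i j =
      (\<Sum>l<a. cblock a A B i l * cblock a A B l j) + (\<Sum>l<b. cblock a A B i (a + l) * cblock a A B (a + l) j)"
      unfolding cmult_def sum_lessThan_add ..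
    consider "i < a" "j < a" | "i < a" "\<not> j < a" | "\<not> i < a" "j < a" | "\<not> i < a" "\<not> j < a"
      by blast
    then show ?thesis
    proof cases
      case 1
      then show ?thesis
        unfolding split using A unfolding cproj_def cmult_def cblock_def by simp
    next
      case 4
      then have "i - a < b" "j - a < b"
        using i j by auto
      then show ?thesis
        unfolding split using B 4 unfolding cproj_def cmult_def cblock_def by simp
    qed (unfold split, simp_all add: cblock_def)
  qed
  moreover have "cnj (cblock a A B j i) = cblock a A B i j" if "i < a + b" "j < a + b" for i j
    using A B that unfolding cblock_def cproj_def by auto
  ultimately show ?thesis
    unfolding cproj_def by blast
qed

lemma cproj_zero: "cproj k (\<lambda>i j. 0)"
  by (simp add: cproj_def cmult_def)

lemma cproj_cid: "cproj k cid"
  unfolding cproj_def cmult_def using sum_cid_mult by (auto simp: cid_def)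

lemma ctrace_cid: "ctrace k cid = of_nat k"
  by (simp add: ctrace_def cid_def)

section \<open>Matrices with scalar entries\<close>

lemma ascal_apply_zero: "ascal c 0 = c"
  by (simp add: ascal_apply)

lemma ascal_zero: "ascal 0 = 0"
  by (simp add: ascal_def zero_fun_def)

lemma ascal_inject: "ascal a = ascal b \<longleftrightarrow> a = b"
  by (metis ascal_apply_zero)

lemma ascal_sum: "(\<Sum>l\<in>A. ascal (g l)) = ascal (\<Sum>l\<in>A. g l)"
  by (rule ext) (simp add: sum_fun_apply ascal_apply)

lemma support_ascal: "{\<gamma>. ascal c \<gamma> \<noteq> 0} = (if c = 0 then {} else {0})"
  by (auto simp: ascal_apply)

lemma Aelem_ascal: "Aelem n (ascal c)"
  by (simp add: Aelem_def support_ascal ascal_apply)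

lemma ncoeff_zero_zero: "ncoeff \<theta> n 0 0 \<gamma> = (if \<gamma> = 0 then 1 else 0)"
proof (cases "\<gamma> = 0")
  case True
  have "bounded_index n 0"
    by (simp add: bounded_index_def)
  then show ?thesis
    using ncoeff_leading[of n 0 0 \<theta>] True by simp
next
  case False
  have "ncoeff \<theta> n 0 0 \<gamma> = 0"
  proof (rule ccontr)
    assume "ncoeff \<theta> n 0 0 \<gamma> \<noteq> 0"
    then have "\<gamma> \<le> 0"
      using ncoeff_nonzero_imp by fastforce
    then show False
      using False by (simp add: le_fun_def fun_eq_iff)
  qed
  then show ?thesis
    using False by simp
qed

lemma amult_ascal: "amult \<theta> n (ascal a) (ascal b) = ascal (a * b)"
proof
  fix \<gamma>
  show "amult \<theta> n (ascal a) (ascal b) \<gamma> = ascal (a * b) \<gamma>"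
  proof (cases "a = 0 \<or> b = 0")
    case True
    then show ?thesis
      by (auto simp: amult_def support_ascal ascal_apply)
  next
    case False
    then have "amult \<theta> n (ascal a) (ascal b) \<gamma> = a * b * ncoeff \<theta> n 0 0 \<gamma>"
      by (simp add: amult_def support_ascal ascal_apply_zero)
    then show ?thesis
      by (simp add: ncoeff_zero_zero ascal_apply)
  qed
qed

lemma astar_ascal: "astar \<theta> n (ascal a) = ascal (cnj a)"
proof
  fix \<gamma>
  have parts: "odd_part 0 = 0" "even_part 0 = 0"
    by (simp_all add: odd_part_def even_part_def zero_fun_def)
  show "astar \<theta> n (ascal a) \<gamma> = ascal (cnj a) \<gamma>"
  proof (cases "a = 0")
    case True
    then show ?thesis
      by (simp add: astar_apply support_ascal ascal_apply)
  next
    case False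
    then have "astar \<theta> n (ascal a) \<gamma> = cnj a * ncoeff \<theta> n 0 0 \<gamma>"
      by (simp add: astar_apply support_ascal ascal_apply_zero parts)
    then show ?thesis
      by (simp add: ncoeff_zero_zero ascal_apply)
  qed
qed

definition scalar_part :: "(nat \<Rightarrow> nat \<Rightarrow> elem) \<Rightarrow> nat \<Rightarrow> nat \<Rightarrow> complex" where
  "scalar_part M = (\<lambda>i j. M i j 0)"

definition scalar_mat :: "nat \<Rightarrow> (nat \<Rightarrow> nat \<Rightarrow> elem) \<Rightarrow> bool" where
  "scalar_mat k M \<longleftrightarrow> (\<forall>i<k. \<forall>j<k. M i j = ascal (scalar_part M i j))"

lemma projector_scalar_mat:
  assumes P: "projector \<theta> n P"
  shows "scalar_mat (fst P) (snd P)"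
  unfolding scalar_mat_def scalar_part_def
proof (intro allI impI)
  fix i j assume i: "i < fst P" and j: "j < fst P"
  have row: "\<forall>l<fst P. Aelem n (snd P i l)"
    using P i by (simp add: projector_def is_mat_def)
  have "astar \<theta> n (snd P i l) = snd P l i" if "l < fst P" for l
    using P i that unfolding projector_def madj_def by metis
  then have "(\<Sum>l<fst P. amult \<theta> n (snd P i l) (astar \<theta> n (snd P i l)) \<gamma>)
      = mmult \<theta> n (fst P) (snd P) (snd P) i i \<gamma>" for \<gamma>
    unfolding mmult_def sum_fun_apply by (intro sum.cong) simp_all
  also have "mmult \<theta> n (fst P) (snd P) (snd P) i i = snd P i i"
    using P i by (simp add: projector_def)
  finally have "(\<Sum>l<fst P. amult \<theta> n (snd P i l) (astar \<theta> n (snd P i l)) \<gamma>) = snd P i i \<gamma>" for \<gamma>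
    .
  then have "\<forall>l<fst P. snd P i l = ascal (snd P i l 0)"
    using i by (intro scalar_if_sum_mult_astar_supported[OF row, where \<theta> = \<theta>]) auto
  then show "snd P i j = ascal (snd P i j 0)"
    using j by blast
qed

lemma unitary_scalar_mat:
  assumes U: "unitary \<theta> n k U"
  shows "scalar_mat k U"
  unfolding scalar_mat_def scalar_part_def
proof (intro allI impI)
  fix i j assume i: "i < k" and j: "j < k"
  have row: "\<forall>l<k. Aelem n (U i l)"
    using U i by (simp add: unitary_def is_mat_def)
  have "(\<Sum>l<k. amult \<theta> n (U i l) (astar \<theta> n (U i l)) \<gamma>) = mmult \<theta> n k U (madj \<theta> n U) i i \<gamma>" for \<gamma>
    unfolding mmult_def madj_def sum_fun_apply ..
  also have "mmult \<theta> n k U (madj \<theta> n U) i i = ascal 1"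
    using U i by (simp add: unitary_def)
  finally have "(\<Sum>l<k. amult \<theta> n (U i l) (astar \<theta> n (U i l)) \<gamma>) = ascal 1 \<gamma>" for \<gamma>
    .
  then have "\<forall>l<k. U i l = ascal (U i l 0)"
    by (intro scalar_if_sum_mult_astar_supported[OF row, where \<theta> = \<theta>]) (simp add: ascal_apply)
  then show "U i j = ascal (U i j 0)"
    using j by blast
qed

lemma scalar_part_ascal: "scalar_part (\<lambda>i j. ascal (C i j)) = C"
  by (simp add: scalar_part_def ascal_apply_zero)

lemma scalar_mat_ascal: "scalar_mat k (\<lambda>i j. ascal (C i j))"
  by (simp add: scalar_mat_def scalar_part_ascal)

lemma cmult_cong:
  "(\<forall>l<k. A i l = A' i l) \<Longrightarrow> (\<forall>l<k. B l j = B' l j) \<Longrightarrow> cmult k A B i j = cmult k A' B' i j"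
  unfolding cmult_def by (intro sum.cong refl) auto

lemma mmult_scalar_mat:
  assumes "scalar_mat k M" "scalar_mat k N" "i < k" "j < k"
  shows "mmult \<theta> n k M N i j = ascal (cmult k (scalar_part M) (scalar_part N) i j)"
proof -
  have "mmult \<theta> n k M N i j = (\<Sum>l<k. amult \<theta> n (ascal (scalar_part M i l)) (ascal (scalar_part N l j)))"
    unfolding mmult_def using assms unfolding scalar_mat_def by (intro sum.cong refl) auto
  also have "\<dots> = ascal (cmult k (scalar_part M) (scalar_part N) i j)"
    unfolding amult_ascal ascal_sum cmult_def ..
  finally show ?thesis .
qed

lemma madj_scalar_mat:
  "scalar_mat k M \<Longrightarrow> i < k \<Longrightarrow> j < k \<Longrightarrow> madj \<theta> n M i j = ascal (cadj (scalar_part M) i j)"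
  by (simp add: scalar_mat_def madj_def cadj_def astar_ascal)

lemma scalar_mat_mmult: "scalar_mat k M \<Longrightarrow> scalar_mat k N \<Longrightarrow> scalar_mat k (mmult \<theta> n k M N)"
  unfolding scalar_mat_def[of k "mmult \<theta> n k M N"] by (simp add: mmult_scalar_mat scalar_part_def ascal_apply_zero)

lemma scalar_mat_madj: "scalar_mat k M \<Longrightarrow> scalar_mat k (madj \<theta> n M)"
  unfolding scalar_mat_def[of k "madj \<theta> n M"] by (simp add: madj_scalar_mat scalar_part_def ascal_apply_zero)

lemma scalar_part_mmult:
  "scalar_mat k M \<Longrightarrow> scalar_mat k N \<Longrightarrow> i < k \<Longrightarrow> j < k
    \<Longrightarrow> scalar_part (mmult \<theta> n k M N) i j = cmult k (scalar_part M) (scalar_part N) i j"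
  by (simp add: mmult_scalar_mat scalar_part_def ascal_apply_zero)

lemma scalar_part_madj:
  "scalar_mat k M \<Longrightarrow> i < k \<Longrightarrow> j < k \<Longrightarrow> scalar_part (madj \<theta> n M) i j = cadj (scalar_part M) i j"
  by (simp add: madj_scalar_mat scalar_part_def ascal_apply_zero)

lemma mmult_madj_scalar_mat:
  assumes U: "scalar_mat k U" and ij: "i < k" "j < k"
  shows "mmult \<theta> n k U (madj \<theta> n U) i j = ascal (cmult k (scalar_part U) (cadj (scalar_part U)) i j)"
    and "mmult \<theta> n k (madj \<theta> n U) U i j = ascal (cmult k (cadj (scalar_part U)) (scalar_part U) i j)"
proof -
  have "cmult k (scalar_part U) (scalar_part (madj \<theta> n U)) i j = cmult k (scalar_part U) (cadj (scalar_part U)) i j"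
    "cmult k (scalar_part (madj \<theta> n U)) (scalar_part U) i j = cmult k (cadj (scalar_part U)) (scalar_part U) i j"
    by (rule cmult_cong; use scalar_part_madj[OF U] ij in simp)+
  then show "mmult \<theta> n k U (madj \<theta> n U) i j = ascal (cmult k (scalar_part U) (cadj (scalar_part U)) i j)"
    "mmult \<theta> n k (madj \<theta> n U) U i j = ascal (cmult k (cadj (scalar_part U)) (scalar_part U) i j)"
    using mmult_scalar_mat[OF U scalar_mat_madj[OF U] ij] mmult_scalar_mat[OF scalar_mat_madj[OF U] U ij]
    by simp_all
qed

lemma mmult_conj_scalar_mat:
  assumes U: "scalar_mat k U" and D: "scalar_mat k D" and "i < k" "j < k"
  shows "mmult \<theta> n k (mmult \<theta> n k U D) (madj \<theta> n U) i j
    = ascal (cmult k (cmult k (scalar_part U) (scalar_part D)) (cadj (scalar_part U)) i j)"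
proof -
  have "mmult \<theta> n k (mmult \<theta> n k U D) (madj \<theta> n U) i j
      = ascal (cmult k (scalar_part (mmult \<theta> n k U D)) (scalar_part (madj \<theta> n U)) i j)"
    by (rule mmult_scalar_mat[OF scalar_mat_mmult[OF U D] scalar_mat_madj[OF U] assms(3,4)])
  also have "cmult k (scalar_part (mmult \<theta> n k U D)) (scalar_part (madj \<theta> n U)) i j
      = cmult k (cmult k (scalar_part U) (scalar_part D)) (cadj (scalar_part U)) i j"
    by (rule cmult_cong) (use scalar_part_mmult[OF U D] scalar_part_madj[OF U] assms(3,4) in auto)
  finally show ?thesis .
qed

lemma projector_iff_cproj:
  "projector \<theta> n P \<longleftrightarrow> scalar_mat (fst P) (snd P) \<and> cproj (fst P) (scalar_part (snd P))"
proof
  assume P: "projector \<theta> n P"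
  then have S: "scalar_mat (fst P) (snd P)"
    by (rule projector_scalar_mat)
  have "cproj (fst P) (scalar_part (snd P))"
    unfolding cproj_def
  proof (intro allI impI conjI)
    fix i j assume ij: "i < fst P" "j < fst P"
    have "scalar_part (mmult \<theta> n (fst P) (snd P) (snd P)) i j = scalar_part (snd P) i j"
      "scalar_part (madj \<theta> n (snd P)) i j = scalar_part (snd P) i j"
      using P ij by (simp_all add: projector_def scalar_part_def)
    then show "cmult (fst P) (scalar_part (snd P)) (scalar_part (snd P)) i j = scalar_part (snd P) i j"
      "cnj (scalar_part (snd P) j i) = scalar_part (snd P) i j"
      using scalar_part_mmult[OF S S ij] scalar_part_madj[OF S ij] by (simp_all add: cadj_def)
  qed
  with S show "scalar_mat (fst P) (snd P) \<and> cproj (fst P) (scalar_part (snd P))"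
    by blast
next
  assume "scalar_mat (fst P) (snd P) \<and> cproj (fst P) (scalar_part (snd P))"
  then have S: "scalar_mat (fst P) (snd P)" and C: "cproj (fst P) (scalar_part (snd P))"
    by blast+
  have "is_mat n P"
    using S by (simp add: is_mat_def scalar_mat_def Aelem_ascal)
  moreover have "mmult \<theta> n (fst P) (snd P) (snd P) i j = snd P i j" "madj \<theta> n (snd P) i j = snd P i j"
    if "i < fst P" "j < fst P" for i j
    using mmult_scalar_mat[OF S S that] madj_scalar_mat[OF S that] C S that
    unfolding cproj_def scalar_mat_def cadj_def by simp_all
  ultimately show "projector \<theta> n P"
    by (simp add: projector_def)
qed

lemma unitary_iff_cunitary: "unitary \<theta> n k U \<longleftrightarrow> scalar_mat k U \<and> cunitary k (scalar_part U)"
proof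
  assume U: "unitary \<theta> n k U"
  then have S: "scalar_mat k U"
    by (rule unitary_scalar_mat)
  have "cmult k (scalar_part U) (cadj (scalar_part U)) i j = cid i j \<and>
    cmult k (cadj (scalar_part U)) (scalar_part U) i j = cid i j" if ij: "i < k" "j < k" for i j
  proof -
    have "mmult \<theta> n k U (madj \<theta> n U) i j = ascal (cid i j)"
      "mmult \<theta> n k (madj \<theta> n U) U i j = ascal (cid i j)"
      using U ij by (simp_all add: unitary_def cid_def ascal_zero)
    then show ?thesis
      unfolding mmult_madj_scalar_mat[OF S ij] ascal_inject by blast
  qed
  with S show "scalar_mat k U \<and> cunitary k (scalar_part U)"
    by (simp add: cunitary_def)
next
  assume "scalar_mat k U \<and> cunitary k (scalar_part U)"
  then have S: "scalar_mat k U" and C: "cunitary k (scalar_part U)"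
    by blast+
  have "is_mat n (k, U)"
    using S by (simp add: is_mat_def scalar_mat_def Aelem_ascal)
  moreover have "mmult \<theta> n k U (madj \<theta> n U) i j = (if i = j then aone else 0) \<and>
    mmult \<theta> n k (madj \<theta> n U) U i j = (if i = j then aone else 0)" if ij: "i < k" "j < k" for i j
  proof -
    have "(if i = j then aone else 0) = ascal (cid i j)"
      by (simp add: cid_def ascal_zero)
    then show ?thesis
      unfolding mmult_madj_scalar_mat[OF S ij] using C ij by (simp add: cunitary_def)
  qed
  ultimately show "unitary \<theta> n k U"
    by (simp add: unitary_def)
qed

section \<open>The rank on K_0\<close>

lemma fst_dsum: "fst (dsum P Q) = fst P + fst Q"
  by (simp add: dsum_def)

lemma scalar_part_dsum: "scalar_part (snd (dsum P Q)) = cblock (fst P) (scalar_part (snd P)) (scalar_part (snd Q))"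
  unfolding scalar_part_def dsum_def cblock_def by (intro ext) simp

lemma scalar_mat_dsum:
  assumes P: "scalar_mat (fst P) (snd P)" and Q: "scalar_mat (fst Q) (snd Q)"
  shows "scalar_mat (fst (dsum P Q)) (snd (dsum P Q))"
  unfolding scalar_mat_def fst_dsum scalar_part_dsum
proof (intro allI impI)
  fix i j assume i: "i < fst P + fst Q" and j: "j < fst P + fst Q"
  consider "i < fst P \<and> j < fst P" | "fst P \<le> i \<and> fst P \<le> j" | "\<not> (i < fst P \<and> j < fst P)" "\<not> (fst P \<le> i \<and> fst P \<le> j)"
    by blast
  then show "snd (dsum P Q) i j = ascal (cblock (fst P) (scalar_part (snd P)) (scalar_part (snd Q)) i j)"
  proof cases
    case 1
    then show ?thesis
      using P unfolding dsum_def cblock_def scalar_mat_def by simp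
  next
    case 2
    then have "i - fst P < fst Q" "j - fst P < fst Q"
      using i j by auto
    then show ?thesis
      using Q 2 unfolding dsum_def cblock_def scalar_mat_def by simp
  next
    case 3
    then show ?thesis
      unfolding dsum_def cblock_def by (auto simp: ascal_zero)
  qed
qed

lemma projector_dsum:
  assumes "projector \<theta> n P" "projector \<theta> n Q"
  shows "projector \<theta> n (dsum P Q)"
proof -
  have "scalar_mat (fst P) (snd P)" "cproj (fst P) (scalar_part (snd P))"
    "scalar_mat (fst Q) (snd Q)" "cproj (fst Q) (scalar_part (snd Q))"
    using assms by (simp_all add: projector_iff_cproj)
  then have "scalar_mat (fst (dsum P Q)) (snd (dsum P Q))" "cproj (fst (dsum P Q)) (scalar_part (snd (dsum P Q)))"
    unfolding fst_dsum scalar_part_dsum by (simp_all add: scalar_mat_dsum[unfolded fst_dsum] cproj_cblock)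
  then show ?thesis
    by (simp only: projector_iff_cproj)
qed

lemma projector_zmat: "projector \<theta> n (zmat m)"
proof -
  have "zmat m = (m, \<lambda>i j. ascal 0)"
    by (simp add: zmat_def ascal_zero)
  then show ?thesis
    by (simp add: projector_iff_cproj scalar_mat_ascal scalar_part_ascal cproj_zero)
qed

definition id_mat :: "nat \<Rightarrow> mat" where
  "id_mat k = (k, \<lambda>i j. ascal (cid i j))"

lemma projector_id_mat: "projector \<theta> n (id_mat k)"
  by (simp add: projector_iff_cproj id_mat_def scalar_mat_ascal scalar_part_ascal cproj_cid)

definition mat_trace :: "mat \<Rightarrow> complex" where
  "mat_trace P = ctrace (fst P) (scalar_part (snd P))"

lemma mat_trace_dsum: "mat_trace (dsum P Q) = mat_trace P + mat_trace Q"
  by (simp add: mat_trace_def fst_dsum scalar_part_dsum ctrace_cblock)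

lemma mat_trace_zmat: "mat_trace (zmat m) = 0"
  by (simp add: mat_trace_def zmat_def ctrace_def scalar_part_def)

lemma mat_trace_id_mat: "mat_trace (id_mat k) = of_nat k"
  by (simp add: mat_trace_def id_mat_def scalar_part_ascal ctrace_cid)

lemma proj_equiv_imp_mat_trace_eq:
  assumes P: "projector \<theta> n P" and Q: "projector \<theta> n Q" and E: "proj_equiv \<theta> n P Q"
  shows "mat_trace P = mat_trace Q"
proof -
  obtain m m' U where mm: "fst P + m = fst Q + m'" and U: "unitary \<theta> n (fst P + m) U"
    and eq: "\<forall>i<fst P + m. \<forall>j<fst P + m. snd (dsum P (zmat m)) i j =
        mmult \<theta> n (fst P + m) (mmult \<theta> n (fst P + m) U (snd (dsum Q (zmat m')))) (madj \<theta> n U) i j"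
    using E unfolding proj_equiv_def by blast
  define N where "N = fst P + m"
  define P' where "P' = dsum P (zmat m)"
  define Q' where "Q' = dsum Q (zmat m')"
  have sizes: "fst P' = N" "fst Q' = N"
    using mm by (simp_all add: P'_def Q'_def N_def fst_dsum zmat_def)
  have "projector \<theta> n P'" "projector \<theta> n Q'"
    unfolding P'_def Q'_def using P Q by (simp_all add: projector_dsum projector_zmat)
  then have SP': "scalar_mat N (snd P')" and SQ': "scalar_mat N (snd Q')"
    using sizes by (simp_all add: projector_iff_cproj)
  have SU: "scalar_mat N U" and CU: "cunitary N (scalar_part U)"
    using U by (simp_all add: unitary_iff_cunitary N_def)
  have "scalar_part (snd P') i j = cmult N (cmult N (scalar_part U) (scalar_part (snd Q'))) (cadj (scalar_part U)) i j"
    if "i < N" "j < N" for i j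
    using eq[folded N_def P'_def Q'_def, rule_format, OF that] mmult_conj_scalar_mat[OF SU SQ' that, of \<theta> n]
    by (simp add: scalar_part_def ascal_apply_zero)
  then have "mat_trace P' = ctrace N (cmult N (cmult N (scalar_part U) (scalar_part (snd Q'))) (cadj (scalar_part U)))"
    unfolding mat_trace_def sizes ctrace_def by simp
  also have "\<dots> = mat_trace Q'"
    unfolding mat_trace_def sizes by (rule ctrace_unitary_conj[OF CU])
  finally show ?thesis
    by (simp add: P'_def Q'_def mat_trace_dsum mat_trace_zmat)
qed

lemma mat_trace_eq_imp_proj_equiv:
  assumes P: "projector \<theta> n P" and Q: "projector \<theta> n Q" and T: "mat_trace P = mat_trace Q"
  shows "proj_equiv \<theta> n P Q"
proof -
  define N where "N = fst P + fst Q"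
  define P' where "P' = dsum P (zmat (fst Q))"
  define Q' where "Q' = dsum Q (zmat (fst P))"
  have sizes: "fst P' = N" "fst Q' = N"
    by (simp_all add: P'_def Q'_def N_def fst_dsum zmat_def)
  have "projector \<theta> n P'" "projector \<theta> n Q'"
    unfolding P'_def Q'_def using P Q by (simp_all add: projector_dsum projector_zmat)
  then have SP': "scalar_mat N (snd P')" "cproj N (scalar_part (snd P'))"
    and SQ': "scalar_mat N (snd Q')" "cproj N (scalar_part (snd Q'))"
    using sizes by (simp_all add: projector_iff_cproj)
  have "mat_trace P' = mat_trace Q'"
    using T by (simp add: P'_def Q'_def mat_trace_dsum mat_trace_zmat)
  then have "ctrace N (scalar_part (snd P')) = ctrace N (scalar_part (snd Q'))"
    using sizes by (simp add: mat_trace_def)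
  then obtain U0 where U0: "cunitary N U0"
    and conj: "\<forall>i<N. \<forall>j<N. scalar_part (snd P') i j = cmult N (cmult N U0 (scalar_part (snd Q'))) (cadj U0) i j"
    using cproj_unitarily_equivalent[OF SP'(2) SQ'(2)] by blast
  define U where "U = (\<lambda>i j. ascal (U0 i j))"
  have U: "unitary \<theta> n N U"
    using U0 by (simp add: unitary_iff_cunitary U_def scalar_mat_ascal scalar_part_ascal)
  have "snd P' i j = mmult \<theta> n N (mmult \<theta> n N U (snd Q')) (madj \<theta> n U) i j" if "i < N" "j < N" for i j
    using SP'(1) conj mmult_conj_scalar_mat[OF scalar_mat_ascal[of N U0] SQ'(1) that, where \<theta> = \<theta> and n = n] that
    by (simp add: scalar_mat_def U_def scalar_part_ascal)
  then show ?thesis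
    unfolding proj_equiv_def using U N_def P'_def Q'_def by (intro exI[of _ "fst Q"] exI[of _ "fst P"] exI[of _ U]) auto
qed

text \<open>The trace of a projector is a natural number (mat_trace_proj_rank); the floor only
  fixes the type.\<close>

definition proj_rank :: "mat \<Rightarrow> int" where
  "proj_rank P = \<lfloor>Re (mat_trace P)\<rfloor>"

lemma mat_trace_proj_rank:
  assumes "projector \<theta> n P"
  shows "mat_trace P = of_int (proj_rank P)"
proof -
  have "cproj (fst P) (scalar_part (snd P))"
    using assms by (simp add: projector_iff_cproj)
  then obtain r where "mat_trace P = of_nat r"
    unfolding mat_trace_def by (rule cproj_orthonormal_basis)
  then show ?thesis
    by (simp add: proj_rank_def)
qed

lemma proj_rank_dsum:
  assumes "projector \<theta> n P" "projector \<theta> n Q"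
  shows "proj_rank (dsum P Q) = proj_rank P + proj_rank Q"
proof -
  have "mat_trace (dsum P Q) = of_int (proj_rank P + proj_rank Q)"
    using mat_trace_proj_rank[OF assms(1)] mat_trace_proj_rank[OF assms(2)] by (simp add: mat_trace_dsum)
  then show ?thesis
    unfolding proj_rank_def[of "dsum P Q"] by simp
qed

lemma proj_rank_zmat: "proj_rank (zmat m) = 0"
  by (simp add: proj_rank_def mat_trace_zmat)

lemma proj_rank_id_mat: "proj_rank (id_mat k) = int k"
  by (simp add: proj_rank_def mat_trace_id_mat)

lemma K0_eq_iff_proj_rank:
  assumes P: "projector \<theta> n P" and Q: "projector \<theta> n Q"
    and P': "projector \<theta> n P'" and Q': "projector \<theta> n Q'"
  shows "K0_eq \<theta> n P Q P' Q' \<longleftrightarrow> proj_rank P - proj_rank Q = proj_rank P' - proj_rank Q'"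
proof -
  have "mat_trace (dsum (dsum P Q') R) = of_int (proj_rank P + proj_rank Q') + mat_trace R"
    "mat_trace (dsum (dsum P' Q) R) = of_int (proj_rank P' + proj_rank Q) + mat_trace R" for R
    using mat_trace_proj_rank[OF P] mat_trace_proj_rank[OF Q]
      mat_trace_proj_rank[OF P'] mat_trace_proj_rank[OF Q'] by (simp_all add: mat_trace_dsum)
  then have traces: "mat_trace (dsum (dsum P Q') R) = mat_trace (dsum (dsum P' Q) R)
      \<longleftrightarrow> proj_rank P - proj_rank Q = proj_rank P' - proj_rank Q'" for R
    by (simp only: add_right_cancel of_int_eq_iff) linarith
  show ?thesis
  proof
    assume "K0_eq \<theta> n P Q P' Q'"
    then obtain R where R: "projector \<theta> n R"
      and "proj_equiv \<theta> n (dsum (dsum P Q') R) (dsum (dsum P' Q) R)"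
      unfolding K0_eq_def by blast
    then have "mat_trace (dsum (dsum P Q') R) = mat_trace (dsum (dsum P' Q) R)"
      using proj_equiv_imp_mat_trace_eq projector_dsum[OF projector_dsum[OF P Q'] R]
        projector_dsum[OF projector_dsum[OF P' Q] R] by blast
    then show "proj_rank P - proj_rank Q = proj_rank P' - proj_rank Q'"
      using traces by blast
  next
    assume "proj_rank P - proj_rank Q = proj_rank P' - proj_rank Q'"
    then have "proj_equiv \<theta> n (dsum (dsum P Q') (zmat 0)) (dsum (dsum P' Q) (zmat 0))"
      using traces mat_trace_eq_imp_proj_equiv projector_dsum[OF projector_dsum[OF P Q'] projector_zmat]
        projector_dsum[OF projector_dsum[OF P' Q] projector_zmat] by blast
    then show "K0_eq \<theta> n P Q P' Q'"
      unfolding K0_eq_def using projector_zmat by blast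
  qed
qed

lemma proj_rank_difference_surj: "\<exists>P Q. projector \<theta> n P \<and> projector \<theta> n Q \<and> proj_rank P - proj_rank Q = z"
proof (cases "0 \<le> z")
  case True
  then show ?thesis
    using projector_id_mat projector_zmat proj_rank_id_mat[of "nat z"] proj_rank_zmat[of 0]
    by (intro exI[of _ "id_mat (nat z)"] exI[of _ "zmat 0"]) simp
next
  case False
  then show ?thesis
    using projector_id_mat projector_zmat proj_rank_id_mat[of "nat (- z)"] proj_rank_zmat[of 0]
    by (intro exI[of _ "zmat 0"] exI[of _ "id_mat (nat (- z))"]) simp
qed

theorem corollary2p5:
  fixes n :: nat and \<theta> :: "nat \<Rightarrow> real"
  assumes "\<forall>m<n. 0 < \<theta> m"
  shows "(\<forall>P. projector \<theta> n P \<longrightarrow> (\<forall>i<fst P. \<forall>j<fst P. \<exists>c. snd P i j = ascal c))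
    \<and> (\<exists>\<phi> :: mat \<Rightarrow> mat \<Rightarrow> int.
         (\<forall>P Q P' Q'. projector \<theta> n P \<and> projector \<theta> n Q \<and> projector \<theta> n P' \<and> projector \<theta> n Q' \<longrightarrow>
            (K0_eq \<theta> n P Q P' Q' \<longleftrightarrow> \<phi> P Q = \<phi> P' Q') \<and>
            \<phi> (dsum P P') (dsum Q Q') = \<phi> P Q + \<phi> P' Q') \<and>
         (\<forall>z. \<exists>P Q. projector \<theta> n P \<and> projector \<theta> n Q \<and> \<phi> P Q = z))"
proof (intro conjI exI[of _ "\<lambda>P Q. proj_rank P - proj_rank Q"] allI impI)
  show "\<exists>c. snd P i j = ascal c" if "projector \<theta> n P" "i < fst P" "j < fst P" for P i j
    using projector_scalar_mat[OF that(1)] that(2,3) unfolding scalar_mat_def by blast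
  fix P Q P' Q'
  assume "projector \<theta> n P \<and> projector \<theta> n Q \<and> projector \<theta> n P' \<and> projector \<theta> n Q'"
  then have proj: "projector \<theta> n P" "projector \<theta> n Q" "projector \<theta> n P'" "projector \<theta> n Q'"
    by blast+
  then show "K0_eq \<theta> n P Q P' Q' \<longleftrightarrow> proj_rank P - proj_rank Q = proj_rank P' - proj_rank Q'"
    by (rule K0_eq_iff_proj_rank)
  show "proj_rank (dsum P P') - proj_rank (dsum Q Q') = proj_rank P - proj_rank Q + (proj_rank P' - proj_rank Q')"
    using proj_rank_dsum[OF proj(1,3)] proj_rank_dsum[OF proj(2,4)] by simp
qed (rule proj_rank_difference_surj)

end
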